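(* Let $n \ge 1$, let $C_n$ denote the configuration space of $n$ distinct unordered points in $\mathbb{R}^2$, and let $$T = \big([-1,1]\times\{0\}\big) \cup \big(\{0\}\times[0,1]\big) \subset \mathbb{R}^2 .$$ Let $C_n(T) \subset C_n$ be the subspace of configurations all of whose $n$ points lie in $T$, and fix a basepoint configuration $x_0 \in C_n(T)$ whose points all lie on $[-1,1]\times\{0\}$. Then every loop in $C_n$ based at $x_0$ is homotopic, relative to the basepoint, to a loop that stays inside $C_n(T)$. Equivalently, the homomorphism $\pi_1(C_n(T),x_0) \to \pi_1(C_n,x_0) \cong B_n$ induced by the inclusion $C_n(T)\hookrightarrow C_n$ is surjective.
   Context: $C_n=\{\{p_1,\dots,p_n\}\subset\mathbb{R}^2 : p_i\neq p_j \text{ for } i\neq j\}$, topologized as the quotient of the space of ordered $n$-tuples of distinct points of $\mathbb{R}^2$ by the action of the symmetric group $S_n$ permuting the points. A loop in $C_n$ (a "motion" of $n$ points in the plane) describes an $n$-strand braid. $B_n$ denotes the $n$-strand Artin braid group, with presentation $\langle b_1,\dots,b_{n-1} \mid b_ib_{i+1}b_i=b_{i+1}b_ib_{i+1}\ (1\le i\le n-2),\ b_ib_j=b_jb_i\ (|i-j|\ge 2)\rangle$, and $\pi_1(C_n)\cong B_n$. *)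

theory Defs
  imports "HOL-Analysis.Analysis"
begin

definition quotient_topology :: "'a topology \<Rightarrow> ('a \<Rightarrow> 'b) \<Rightarrow> 'b topology" where
  "quotient_topology X f =
     topology (\<lambda>U. U \<subseteq> f ` topspace X \<and> openin X {x \<in> topspace X. f x \<in> U})"

lemma istopology_quotient:
  "istopology (\<lambda>U. U \<subseteq> f ` topspace X \<and> openin X {x \<in> topspace X. f x \<in> U})"
proof -
  have i: "{x \<in> topspace X. f x \<in> S \<inter> T} = {x \<in> topspace X. f x \<in> S} \<inter> {x \<in> topspace X. f x \<in> T}"
    for S T by auto
  have u: "{x \<in> topspace X. f x \<in> \<Union>K} = \<Union>((\<lambda>S. {x \<in> topspace X. f x \<in> S}) ` K)"
    for K by auto
  show ?thesis
    unfolding istopology_def i u by (auto intro!: openin_Union openin_Int)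
qed

lemma openin_quotient_topology:
  "openin (quotient_topology X f) U \<longleftrightarrow>
     U \<subseteq> f ` topspace X \<and> openin X {x \<in> topspace X. f x \<in> U}"
  unfolding quotient_topology_def using istopology_quotient[of f X] by (simp add: topology_inverse')

definition ordered_conf :: "nat \<Rightarrow> (nat \<Rightarrow> real \<times> real) set" where
  "ordered_conf n = {p \<in> PiE {..<n} (\<lambda>_. UNIV). inj_on p {..<n}}"

definition ordered_conf_top :: "nat \<Rightarrow> (nat \<Rightarrow> real \<times> real) topology" where
  "ordered_conf_top n = subtopology (product_topology (\<lambda>_. euclidean) {..<n}) (ordered_conf n)"

text \<open>Unordered configuration space C_n: quotient of ordered configurations
  by the symmetric group, i.e. under the map taking a tuple to its set of points.\<close>
definition conf_space :: "nat \<Rightarrow> (real \<times> real) set topology" where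
  "conf_space n = quotient_topology (ordered_conf_top n) (\<lambda>p. p ` {..<n})"

definition T_graph :: "(real \<times> real) set" where
  "T_graph = {(x, 0) | x. -1 \<le> x \<and> x \<le> 1} \<union> {(0, y) | y. 0 \<le> y \<and> y \<le> 1}"

definition conf_T :: "nat \<Rightarrow> (real \<times> real) set set" where
  "conf_T n = {S \<in> topspace (conf_space n). S \<subseteq> T_graph}"

end

theory Submission
  imports Defs
begin

text \<open>
  Lift the loop to ordered configurations and subdivide it so finely that on each piece every
  point stays in its own small open square, the squares of a piece being pairwise disjoint.
  Within these squares the loop is homotopic, by straight lines, to a staircase motion whose
  points move alternately vertically, with pairwise distinct abscissae, and horizontally, at
  pairwise distinct heights.

  A motion R is homotopic to a motion Q by straight lines in the configuration space as soon as
  \<open>(R i - R k) \<bullet> (Q i - Q k) > 0\<close> for all \<open>i \<noteq> k\<close> at all times. For the staircase such a Q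
  inside T is explicit: during the vertical moves its points sit on the bar in the order of the
  abscissae, during the horizontal moves on the stem in the order of the heights, and in between
  they climb onto the stem one at a time.\<close>

section \<open>Configuration spaces\<close>

lemma topspace_quotient_topology:
  "topspace (quotient_topology X f) = f ` topspace X"
proof -
  have "{x \<in> topspace X. f x \<in> f ` topspace X} = topspace X" by auto
  then have "openin (quotient_topology X f) (f ` topspace X)"
    by (auto simp: openin_quotient_topology)
  moreover have "U \<subseteq> f ` topspace X" if "openin (quotient_topology X f) U" for U
    using that by (simp add: openin_quotient_topology)
  ultimately show ?thesis
    by (metis openin_subset subset_antisym openin_topspace)
qed

lemma continuous_map_quotient_topology:
  "continuous_map X (quotient_topology X f) f"
  unfolding continuous_map_def
  by (auto simp: topspace_quotient_topology openin_quotient_topology)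

lemma topspace_ordered_conf_top: "topspace (ordered_conf_top n) = ordered_conf n"
  unfolding ordered_conf_top_def ordered_conf_def by (auto simp: topspace_product_topology)

lemma topspace_conf_space: "topspace (conf_space n) = (\<lambda>p. p ` {..<n}) ` ordered_conf n"
  unfolding conf_space_def by (simp add: topspace_quotient_topology topspace_ordered_conf_top)

lemma conf_space_elemE:
  assumes "S \<in> topspace (conf_space n)"
  obtains p where "p \<in> ordered_conf n" "S = p ` {..<n}"
  using assms unfolding topspace_conf_space by auto

lemma finite_conf_space_elem:
  assumes "S \<in> topspace (conf_space n)"
  shows "finite S" and "card S = n"
  using assms by (auto elim!: conf_space_elemE simp: card_image ordered_conf_def)

lemma continuous_map_conf_space:
  assumes "\<And>j. j < n \<Longrightarrow> continuous_map X euclidean (\<lambda>z. P z j)"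
    and "\<And>z. z \<in> topspace X \<Longrightarrow> P z \<in> ordered_conf n"
  shows "continuous_map X (conf_space n) (\<lambda>z. P z ` {..<n})"
proof -
  have "continuous_map X (ordered_conf_top n) P"
    unfolding ordered_conf_top_def using assms
    by (auto simp: continuous_map_in_subtopology continuous_map_componentwise ordered_conf_def PiE_def)
  then have "continuous_map X (conf_space n) ((\<lambda>p. p ` {..<n}) \<circ> P)"
    unfolding conf_space_def by (rule continuous_map_compose[OF _ continuous_map_quotient_topology])
  then show ?thesis by (simp add: o_def)
qed

lemma openin_conf_space_meeting:
  assumes "open B"
  shows "openin (conf_space n) {S \<in> topspace (conf_space n). S \<inter> B \<noteq> {}}"
proof -
  have proj: "openin (ordered_conf_top n) {p \<in> ordered_conf n. p j \<in> B}" if "j < n" for j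
  proof -
    have "continuous_map (ordered_conf_top n) euclidean (\<lambda>p. p j)"
      unfolding ordered_conf_top_def using that
      by (intro continuous_map_from_subtopology continuous_map_product_projection) simp
    from openin_continuous_map_preimage[OF this, of B] show ?thesis
      using assms by (simp add: topspace_ordered_conf_top)
  qed
  have "{p \<in> ordered_conf n. p ` {..<n} \<in> {S \<in> topspace (conf_space n). S \<inter> B \<noteq> {}}}
      = (\<Union>j\<in>{..<n}. {p \<in> ordered_conf n. p j \<in> B})"
    unfolding topspace_conf_space by auto
  then show ?thesis
    using proj unfolding conf_space_def openin_quotient_topology topspace_quotient_topology
    by (auto simp: topspace_ordered_conf_top)
qed

section \<open>Straight-line homotopies\<close>

definition affine_mix :: "nat \<Rightarrow> real \<Rightarrow> (nat \<Rightarrow> real \<times> real) \<Rightarrow> (nat \<Rightarrow> real \<times> real) \<Rightarrow> nat \<Rightarrow> real \<times> real"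
  where "affine_mix n s P Q = restrict (\<lambda>j. (1 - s) *\<^sub>R P j + s *\<^sub>R Q j) {..<n}"

lemma homotopic_conf_space_by_affine_mix:
  fixes P Q :: "real \<Rightarrow> nat \<Rightarrow> real \<times> real"
  assumes contP: "\<And>j. j < n \<Longrightarrow> continuous_on {0..1} (\<lambda>t. P t j)"
    and contQ: "\<And>j. j < n \<Longrightarrow> continuous_on {0..1} (\<lambda>t. Q t j)"
    and mix: "\<And>s t. s \<in> {0..1} \<Longrightarrow> t \<in> {0..1} \<Longrightarrow> affine_mix n s (P t) (Q t) \<in> ordered_conf n"
    and PQ0: "\<And>j. j < n \<Longrightarrow> P 0 j = Q 0 j" and PQ1: "\<And>j. j < n \<Longrightarrow> P 1 j = Q 1 j"
    and P0: "P 0 ` {..<n} = x0" and P1: "P 1 ` {..<n} = x0"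
  shows "homotopic_with (\<lambda>k. k 0 = x0 \<and> k 1 = x0) (top_of_set {0..1}) (conf_space n)
           (\<lambda>t. P t ` {..<n}) (\<lambda>t. Q t ` {..<n})"
proof -
  define H where "H = (\<lambda>z::real \<times> real. affine_mix n (fst z) (P (snd z)) (Q (snd z)))"
  have "continuous_map (top_of_set ({0..1} \<times> {0..1})) (conf_space n) (\<lambda>z. H z ` {..<n})"
  proof (rule continuous_map_conf_space)
    fix j assume j: "j < n"
    have "continuous_on ({0..1} \<times> {0..1}) (\<lambda>z. (1 - fst z) *\<^sub>R P (snd z) j + fst z *\<^sub>R Q (snd z) j)"
      by (intro continuous_intros continuous_on_compose2[OF contP[OF j]]
          continuous_on_compose2[OF contQ[OF j]]) auto
    then show "continuous_map (top_of_set ({0..1} \<times> {0..1})) euclidean (\<lambda>z. H z j)"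
      unfolding H_def affine_mix_def using j by simp
  qed (use mix in \<open>auto simp: H_def\<close>)
  moreover have "H (s, 0) ` {..<n} = x0 \<and> H (s, 1) ` {..<n} = x0" for s
  proof -
    have "H (s, 0) ` {..<n} = P 0 ` {..<n}" "H (s, 1) ` {..<n} = P 1 ` {..<n}"
      using PQ0 PQ1 by (auto simp: H_def affine_mix_def scaleR_collapse intro!: image_cong)
    then show ?thesis using P0 P1 by simp
  qed
  moreover have "H (0, t) ` {..<n} = P t ` {..<n}" "H (1, t) ` {..<n} = Q t ` {..<n}" for t
    by (auto simp: H_def affine_mix_def intro!: image_cong)
  ultimately show ?thesis
    unfolding homotopic_with_def by (intro exI[of _ "\<lambda>z. H z ` {..<n}"]) auto
qed

lemma affine_mix_in_ordered_conf_disjoint_convex: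
  assumes "\<And>j. j < n \<Longrightarrow> P j \<in> B j \<and> Q j \<in> B j" "\<And>j. j < n \<Longrightarrow> convex (B j)"
    and "\<And>i k. i < n \<Longrightarrow> k < n \<Longrightarrow> i \<noteq> k \<Longrightarrow> B i \<inter> B k = {}" "0 \<le> s" "s \<le> 1"
  shows "affine_mix n s P Q \<in> ordered_conf n"
proof -
  have "(1 - s) *\<^sub>R P j + s *\<^sub>R Q j \<in> B j" if "j < n" for j
    using assms(1,2)[OF that] assms(4,5) by (intro convexD) auto
  then have "inj_on (affine_mix n s P Q) {..<n}"
    using assms(3) unfolding affine_mix_def by (fastforce intro: inj_onI)
  then show ?thesis unfolding ordered_conf_def affine_mix_def by simp
qed

definition aligned :: "nat \<Rightarrow> (nat \<Rightarrow> real \<times> real) \<Rightarrow> (nat \<Rightarrow> real \<times> real) \<Rightarrow> bool" where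
  "aligned n P Q \<longleftrightarrow> (\<forall>i<n. \<forall>k<n. i \<noteq> k \<longrightarrow> (P i - P k) \<bullet> (Q i - Q k) > 0)"

lemma aligned_cong:
  assumes "aligned n P Q" "\<And>j. j < n \<Longrightarrow> P' j = P j" "\<And>j. j < n \<Longrightarrow> Q' j = Q j"
  shows "aligned n P' Q'"
  using assms unfolding aligned_def by auto

lemma aligned_imp_inj_on:
  assumes "aligned n P Q"
  shows "inj_on P {..<n}" and "inj_on Q {..<n}"
  using assms unfolding aligned_def by (fastforce intro: inj_onI)+

lemma aligned_affine_mix_in_ordered_conf:
  assumes "aligned n P Q" "0 \<le> s" "s \<le> 1"
  shows "affine_mix n s P Q \<in> ordered_conf n"
proof -
  have "(1 - s) *\<^sub>R P i + s *\<^sub>R Q i \<noteq> (1 - s) *\<^sub>R P k + s *\<^sub>R Q k"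
    if ik: "i < n" "k < n" "i \<noteq> k" for i k
  proof
    define a where "a = P i - P k"
    define b where "b = Q i - Q k"
    assume "(1 - s) *\<^sub>R P i + s *\<^sub>R Q i = (1 - s) *\<^sub>R P k + s *\<^sub>R Q k"
    then have "a \<bullet> ((1 - s) *\<^sub>R a + s *\<^sub>R b) = 0"
      unfolding a_def b_def by (simp add: algebra_simps)
    moreover have "0 < a \<bullet> b" "a \<noteq> 0"
      using assms(1) aligned_imp_inj_on(1)[OF assms(1)] ik
      unfolding aligned_def a_def b_def by (auto dest: inj_onD)
    then have "0 < (1 - s) * (a \<bullet> a) + s * (a \<bullet> b)"
      using assms(2,3) by (cases "s = 0") (auto intro: add_nonneg_pos)
    ultimately show False by (simp add: inner_add_right)
  qed
  then show ?thesis
    unfolding ordered_conf_def affine_mix_def by (auto intro!: inj_onI)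
qed

lemma aligned_fst_monotone:
  assumes "inj_on x {..<n}" "\<And>i k. i < n \<Longrightarrow> k < n \<Longrightarrow> x k < x i \<Longrightarrow> q k < q i"
  shows "aligned n (\<lambda>j. (x j, y j)) (\<lambda>j. (q j, 0))"
  unfolding aligned_def
proof (intro allI impI)
  fix i k assume ik: "i < n" "k < n" "i \<noteq> k"
  then have "x i \<noteq> x k" using assms(1) by (auto dest: inj_onD)
  then have "x k < x i \<or> x i < x k" by linarith
  then show "0 < ((x i, y i) - (x k, y k)) \<bullet> ((q i, 0) - (q k, 0))"
    using assms(2)[of i k] assms(2)[of k i] ik by (auto simp: mult_neg_neg)
qed

lemma aligned_snd_monotone:
  assumes "inj_on y {..<n}" "\<And>i k. i < n \<Longrightarrow> k < n \<Longrightarrow> y k < y i \<Longrightarrow> q k < q i"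
  shows "aligned n (\<lambda>j. (x j, y j)) (\<lambda>j. (0, q j))"
  unfolding aligned_def
proof (intro allI impI)
  fix i k assume ik: "i < n" "k < n" "i \<noteq> k"
  then have "y i \<noteq> y k" using assms(1) by (auto dest: inj_onD)
  then have "y k < y i \<or> y i < y k" by linarith
  then show "0 < ((x i, y i) - (x k, y k)) \<bullet> ((0, q i) - (0, q k))"
    using assms(2)[of i k] assms(2)[of k i] ik by (auto simp: mult_neg_neg)
qed

section \<open>Concatenating paths\<close>

definition piece_index :: "nat \<Rightarrow> real \<Rightarrow> nat" where
  "piece_index N t = min (N - 1) (nat \<lfloor>t * real N\<rfloor>)"

definition piece_param :: "nat \<Rightarrow> real \<Rightarrow> real" where
  "piece_param N t = t * real N - real (piece_index N t)"

text \<open>The concatenation of N paths \<open>f 0, \<dots>, f (N - 1)\<close>, each parametrised by \<open>[0, 1]\<close>,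
  the k-th one run on \<open>[k / N, (k + 1) / N]\<close>.\<close>
definition join_pieces :: "nat \<Rightarrow> (nat \<Rightarrow> real \<Rightarrow> 'a) \<Rightarrow> real \<Rightarrow> 'a" where
  "join_pieces N f t = f (piece_index N t) (piece_param N t)"

lemma piece_index_param:
  assumes "1 \<le> N" "0 \<le> t" "t \<le> 1"
  shows "piece_index N t < N" "0 \<le> piece_param N t" "piece_param N t \<le> 1"
    "real (piece_index N t) / real N \<le> t" "t \<le> (real (piece_index N t) + 1) / real N"
proof -
  have N: "0 < real N" using assms by simp
  have tN: "0 \<le> t * real N" "t * real N \<le> real N"
    using assms N by (auto simp: mult_le_cancel_right1)
  have fl: "real (nat \<lfloor>t * real N\<rfloor>) \<le> t * real N" "t * real N < real (nat \<lfloor>t * real N\<rfloor>) + 1"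
    using tN by (auto simp: of_nat_nat)
  show "piece_index N t < N" unfolding piece_index_def using assms by auto
  have c: "real (piece_index N t) \<le> t * real N \<and> t * real N \<le> real (piece_index N t) + 1"
  proof (cases "nat \<lfloor>t * real N\<rfloor> \<le> N - 1")
    case True then show ?thesis unfolding piece_index_def using fl by (simp add: min_def)
  next
    case False
    then have "N \<le> nat \<lfloor>t * real N\<rfloor>" by auto
    then have "real N \<le> t * real N" using fl by (smt (verit) of_nat_le_iff)
    then have "t * real N = real N" using tN by simp
    then show ?thesis unfolding piece_index_def using False assms by (auto simp: min_def of_nat_diff)
  qed
  then show "0 \<le> piece_param N t" "piece_param N t \<le> 1" unfolding piece_param_def by auto
  show "real (piece_index N t) / real N \<le> t" using c N by (simp add: divide_le_eq)
  show "t \<le> (real (piece_index N t) + 1) / real N" using c N by (simp add: le_divide_eq)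
qed

lemma piece_subset_unit:
  assumes "k < N"
  shows "{real k / real N .. (real k + 1) / real N} \<subseteq> {0..1}"
proof -
  have "(real k + 1) / real N \<le> 1" using assms by simp
  moreover have "0 \<le> real k / real N" by simp
  ultimately show ?thesis by auto
qed

lemma join_pieces_on_piece:
  assumes "k < N" "real k / real N \<le> t" "t \<le> (real k + 1) / real N"
    and match: "\<And>k. Suc k < N \<Longrightarrow> f k 1 = f (Suc k) 0"
  shows "join_pieces N f t = f k (t * real N - real k)"
proof -
  have N: "0 < real N" using assms by simp
  have a: "real k \<le> t * real N" "t * real N \<le> real k + 1"
    using assms(2,3) N by (auto simp: divide_le_eq le_divide_eq)
  show ?thesis
  proof (cases "t * real N < real k + 1")
    case True
    then have "\<lfloor>t * real N\<rfloor> = int k" using a by (simp add: floor_eq_iff)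
    then have "piece_index N t = k" unfolding piece_index_def using assms by auto
    then show ?thesis unfolding join_pieces_def piece_param_def by simp
  next
    case False
    then have e: "t * real N = real k + 1" using a by simp
    then have fl: "nat \<lfloor>t * real N\<rfloor> = Suc k" by simp
    show ?thesis
    proof (cases "Suc k < N")
      case True
      then have "piece_index N t = Suc k" unfolding piece_index_def fl by auto
      then show ?thesis unfolding join_pieces_def piece_param_def using e match[OF True] by simp
    next
      case False
      then have "piece_index N t = k" unfolding piece_index_def fl using assms by auto
      then show ?thesis unfolding join_pieces_def piece_param_def by simp
    qed
  qed
qed

lemma unit_interval_eq_Union_pieces:
  assumes "1 \<le> N"
  shows "{0..1} = (\<Union>k<N. {real k / real N .. (real k + 1) / real N})"
proof
  show "{0..1} \<subseteq> (\<Union>k<N. {real k / real N .. (real k + 1) / real N})"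
    using piece_index_param[OF assms] by fastforce
qed (use piece_subset_unit in blast)

lemma continuous_on_join_pieces:
  fixes f :: "nat \<Rightarrow> real \<Rightarrow> 'a::topological_space"
  assumes N: "1 \<le> N" and cont: "\<And>k. k < N \<Longrightarrow> continuous_on {0..1} (f k)"
    and match: "\<And>k. Suc k < N \<Longrightarrow> f k 1 = f (Suc k) 0"
  shows "continuous_on {0..1} (join_pieces N f)"
proof -
  have "continuous_on {real k / real N .. (real k + 1) / real N} (join_pieces N f)" if k: "k < N" for k
  proof -
    have "continuous_on {real k / real N .. (real k + 1) / real N} (\<lambda>t. f k (t * real N - real k))"
      by (rule continuous_on_compose2[OF cont[OF k]])
        (use N in \<open>auto intro!: continuous_intros simp: divide_le_eq le_divide_eq\<close>)
    then show ?thesis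
      by (rule continuous_on_cong[THEN iffD1, rotated 2]) (auto simp: join_pieces_on_piece[of k N _ f] k match)
  qed
  then show ?thesis
    by (subst unit_interval_eq_Union_pieces[OF N]) (auto intro: continuous_on_closed_Union)
qed

lemma join_pieces_0: "join_pieces N f 0 = f 0 0"
  unfolding join_pieces_def piece_index_def piece_param_def by simp

lemma join_pieces_1: "1 \<le> N \<Longrightarrow> join_pieces N f 1 = f (N - 1) 1"
  unfolding join_pieces_def piece_index_def piece_param_def by (simp add: of_nat_diff)

section \<open>Lifting paths to ordered configurations\<close>

definition square :: "real \<times> real \<Rightarrow> real \<Rightarrow> (real \<times> real) set" where
  "square z d = {fst z - d <..< fst z + d} \<times> {snd z - d <..< snd z + d}"

lemma mem_square:
  "p \<in> square z d \<longleftrightarrow> fst p \<in> {fst z - d <..< fst z + d} \<and> snd p \<in> {snd z - d <..< snd z + d}"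
  unfolding square_def by (cases p) auto

lemma open_square: "open (square z d)"
  unfolding square_def by (intro open_Times) auto

lemma convex_square: "convex (square z d)"
  unfolding square_def by (intro convex_Times) auto

lemma centre_in_square: "0 < d \<Longrightarrow> z \<in> square z d"
  unfolding square_def by (cases z) auto

definition separation_radius :: "(real \<times> real) set \<Rightarrow> real" where
  "separation_radius c =
     Min (insert 1 {max \<bar>fst a - fst b\<bar> \<bar>snd a - snd b\<bar> | a b. a \<in> c \<and> b \<in> c \<and> a \<noteq> b}) / 2"

lemma separation_radius:
  assumes "finite c"
  shows "0 < separation_radius c"
    and "\<And>a b. a \<in> c \<Longrightarrow> b \<in> c \<Longrightarrow> a \<noteq> b \<Longrightarrow>
           square a (separation_radius c) \<inter> square b (separation_radius c) = {}"
proof -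
  define E where "E = {max \<bar>fst a - fst b\<bar> \<bar>snd a - snd b\<bar> | a b. a \<in> c \<and> b \<in> c \<and> a \<noteq> b}"
  have "E \<subseteq> (\<lambda>(a,b). max \<bar>fst a - fst b\<bar> \<bar>snd a - snd b\<bar>) ` (c \<times> c)" unfolding E_def by force
  then have fE: "finite E" using assms by (meson finite_SigmaI finite_imageI finite_subset)
  have Epos: "\<forall>e\<in>E. 0 < e" unfolding E_def by (auto simp: prod_eq_iff)
  define M where "M = Min (insert 1 E)"
  have d: "separation_radius c = M / 2" unfolding separation_radius_def M_def E_def by simp
  have M: "0 < M" unfolding M_def using fE Epos by (auto simp: Min_gr_iff)
  show "0 < separation_radius c" using d M by simp
  fix a b assume ab: "a \<in> c" "b \<in> c" "a \<noteq> b"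
  then have "max \<bar>fst a - fst b\<bar> \<bar>snd a - snd b\<bar> \<in> E" unfolding E_def by blast
  then have "M \<le> max \<bar>fst a - fst b\<bar> \<bar>snd a - snd b\<bar>" unfolding M_def using fE by (intro Min_le) auto
  then show "square a (separation_radius c) \<inter> square b (separation_radius c) = {}"
    unfolding square_def d by auto
qed

text \<open>A neighbourhood of c in the configuration space, evenly covered by the ordered configurations.\<close>
definition near_conf :: "nat \<Rightarrow> (real \<times> real) set \<Rightarrow> (real \<times> real) set set" where
  "near_conf n c = {S \<in> topspace (conf_space n). \<forall>z\<in>c. S \<inter> square z (separation_radius c) \<noteq> {}}"

lemma openin_near_conf:
  assumes "c \<in> topspace (conf_space n)" "1 \<le> n"
  shows "openin (conf_space n) (near_conf n c)"
proof -
  have c: "finite c" "c \<noteq> {}" using finite_conf_space_elem[OF assms(1)] assms(2) by auto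
  have "near_conf n c = (\<Inter>z\<in>c. {S \<in> topspace (conf_space n). S \<inter> square z (separation_radius c) \<noteq> {}})"
    unfolding near_conf_def using c by auto
  also have "openin (conf_space n) \<dots>"
    using c by (intro openin_INT2 openin_conf_space_meeting open_square) auto
  finally show ?thesis .
qed

lemma near_conf_self:
  assumes "c \<in> topspace (conf_space n)"
  shows "c \<in> near_conf n c"
proof -
  have "0 < separation_radius c"
    using separation_radius(1) finite_conf_space_elem(1)[OF assms] .
  then show ?thesis unfolding near_conf_def using assms centre_in_square by fast
qed

lemma near_conf_squares:
  assumes "c \<in> topspace (conf_space n)" "S \<in> near_conf n c"
  shows "\<And>z. z \<in> c \<Longrightarrow> \<exists>!w. w \<in> S \<and> w \<in> square z (separation_radius c)"
    and "\<And>w. w \<in> S \<Longrightarrow> \<exists>z\<in>c. w \<in> square z (separation_radius c)"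
proof -
  have S: "S \<in> topspace (conf_space n)" using assms unfolding near_conf_def by auto
  have fc: "finite c" "card c = n" using finite_conf_space_elem[OF assms(1)] by auto
  have fS: "finite S" "card S = n" using finite_conf_space_elem[OF S] by auto
  note disj = separation_radius(2)[OF fc(1)]
  have "\<forall>z\<in>c. \<exists>w. w \<in> S \<and> w \<in> square z (separation_radius c)"
    using assms(2) unfolding near_conf_def by auto
  then obtain f where f: "\<And>z. z \<in> c \<Longrightarrow> f z \<in> S \<and> f z \<in> square z (separation_radius c)" by metis
  have "inj_on f c"
  proof (rule inj_onI, rule ccontr)
    fix a b assume "a \<in> c" "b \<in> c" "f a = f b" "a \<noteq> b"
    then show False using f[of a] f[of b] disj[of a b] by auto
  qed
  moreover have "f ` c \<subseteq> S" using f by auto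
  ultimately have img: "f ` c = S" using fc fS by (simp add: card_image card_subset_eq)
  show "\<And>w. w \<in> S \<Longrightarrow> \<exists>z\<in>c. w \<in> square z (separation_radius c)" using img f by blast
  fix z assume z: "z \<in> c"
  show "\<exists>!w. w \<in> S \<and> w \<in> square z (separation_radius c)"
  proof (rule ex1I[of _ "f z"])
    show "f z \<in> S \<and> f z \<in> square z (separation_radius c)" using f z by auto
    fix w assume w: "w \<in> S \<and> w \<in> square z (separation_radius c)"
    then obtain z' where z': "z' \<in> c" "w = f z'" using img by auto
    then have "z' = z" using f[of z'] disj[of z' z] z w by auto
    then show "w = f z" using z' by simp
  qed
qed

definition nearest_point :: "(real \<times> real) set \<Rightarrow> real \<times> real \<Rightarrow> real \<times> real" where
  "nearest_point c v = (THE z. z \<in> c \<and> v \<in> square z (separation_radius c))"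

lemma nearest_point:
  assumes "c \<in> topspace (conf_space n)" "S \<in> near_conf n c" "v \<in> S"
  shows "nearest_point c v \<in> c" "v \<in> square (nearest_point c v) (separation_radius c)"
proof -
  have fc: "finite c" using finite_conf_space_elem[OF assms(1)] by auto
  obtain z where z: "z \<in> c" "v \<in> square z (separation_radius c)"
    using near_conf_squares(2)[OF assms] by blast
  have "nearest_point c v = z" unfolding nearest_point_def
    by (rule the_equality) (use z separation_radius(2)[OF fc, of _ z] in auto)
  then show "nearest_point c v \<in> c" "v \<in> square (nearest_point c v) (separation_radius c)"
    using z by auto
qed

lemma nearest_point_inj:
  assumes c: "c \<in> topspace (conf_space n)" and q: "q \<in> ordered_conf n" "q ` {..<n} \<in> near_conf n c"
    and "i < n" "k < n" "i \<noteq> k"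
  shows "nearest_point c (q i) \<noteq> nearest_point c (q k)"
proof
  assume eq: "nearest_point c (q i) = nearest_point c (q k)"
  have "q i \<noteq> q k" using q(1) assms(4-6) unfolding ordered_conf_def by (auto dest: inj_onD)
  moreover have "\<exists>!w. w \<in> q ` {..<n} \<and> w \<in> square (nearest_point c (q i)) (separation_radius c)"
    using near_conf_squares(1)[OF c q(2) nearest_point(1)[OF c q(2)]] assms(4) by auto
  moreover have "q i \<in> q ` {..<n}" "q k \<in> q ` {..<n}" using assms(4,5) by auto
  moreover have "q i \<in> square (nearest_point c (q i)) (separation_radius c)"
    "q k \<in> square (nearest_point c (q i)) (separation_radius c)"
    using nearest_point(2)[OF c q(2), of "q i"] nearest_point(2)[OF c q(2), of "q k"] eq assms(4,5)
    by auto
  ultimately show False by blast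
qed

lemma disjoint_nearest_squares:
  assumes c: "c \<in> topspace (conf_space n)" and q: "q \<in> ordered_conf n" "q ` {..<n} \<in> near_conf n c"
    and "i < n" "k < n" "i \<noteq> k"
  shows "square (nearest_point c (q i)) (separation_radius c)
           \<inter> square (nearest_point c (q k)) (separation_radius c) = {}"
  using separation_radius(2)[OF finite_conf_space_elem(1)[OF c]] nearest_point(1)[OF c q(2)]
    nearest_point_inj[OF c q] assms(4-6) by auto

text \<open>Continuation of the ordering q of a configuration along g, as long as g stays in
  \<open>near_conf n c\<close>.\<close>
definition local_lift :: "nat \<Rightarrow> (real \<Rightarrow> (real \<times> real) set) \<Rightarrow> (real \<times> real) set
    \<Rightarrow> (nat \<Rightarrow> real \<times> real) \<Rightarrow> real \<Rightarrow> nat \<Rightarrow> real \<times> real" where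
  "local_lift n g c q t =
     restrict (\<lambda>j. THE w. w \<in> g t \<and> w \<in> square (nearest_point c (q j)) (separation_radius c)) {..<n}"

lemma local_lift:
  assumes c: "c \<in> topspace (conf_space n)" and q: "q \<in> ordered_conf n" "q ` {..<n} \<in> near_conf n c"
    and gt: "g t \<in> near_conf n c"
  shows "local_lift n g c q t \<in> ordered_conf n" "local_lift n g c q t ` {..<n} = g t"
    "\<And>j. j < n \<Longrightarrow> local_lift n g c q t j \<in> square (nearest_point c (q j)) (separation_radius c)"
    "\<And>j. j < n \<Longrightarrow> local_lift n g c q t j \<in> g t"
proof -
  have lift: "local_lift n g c q t j \<in> g t \<and>
      local_lift n g c q t j \<in> square (nearest_point c (q j)) (separation_radius c)" if j: "j < n" for j
    using theI'[OF near_conf_squares(1)[OF c gt nearest_point(1)[OF c q(2)]]] j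
    unfolding local_lift_def by auto
  then show "\<And>j. j < n \<Longrightarrow> local_lift n g c q t j \<in> square (nearest_point c (q j)) (separation_radius c)"
    and "\<And>j. j < n \<Longrightarrow> local_lift n g c q t j \<in> g t" by blast+
  have inj: "inj_on (local_lift n g c q t) {..<n}"
  proof (rule inj_onI, rule ccontr)
    fix i k assume "i \<in> {..<n}" "k \<in> {..<n}" "local_lift n g c q t i = local_lift n g c q t k" "i \<noteq> k"
    then show False using disjoint_nearest_squares[OF c q, of i k] lift[of i] lift[of k] by auto
  qed
  then show "local_lift n g c q t \<in> ordered_conf n"
    unfolding ordered_conf_def by (simp add: local_lift_def)
  have gts: "g t \<in> topspace (conf_space n)" using gt unfolding near_conf_def by auto
  have "local_lift n g c q t ` {..<n} \<subseteq> g t" using lift by auto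
  moreover have "card (local_lift n g c q t ` {..<n}) = card (g t)"
    using inj finite_conf_space_elem[OF gts] by (simp add: card_image)
  ultimately show "local_lift n g c q t ` {..<n} = g t"
    using finite_conf_space_elem[OF gts] by (simp add: card_subset_eq)
qed

lemma local_lift_start:
  assumes c: "c \<in> topspace (conf_space n)" and q: "q \<in> ordered_conf n" "q ` {..<n} \<in> near_conf n c"
    and gt: "g t = q ` {..<n}"
  shows "local_lift n g c q t = q"
proof
  fix j
  show "local_lift n g c q t j = q j"
  proof (cases "j < n")
    case True
    have "\<exists>!w. w \<in> g t \<and> w \<in> square (nearest_point c (q j)) (separation_radius c)"
      using near_conf_squares(1)[OF c _ nearest_point(1)[OF c q(2)]] q(2) gt True by auto
    moreover have "q j \<in> g t \<and> q j \<in> square (nearest_point c (q j)) (separation_radius c)"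
      using nearest_point(2)[OF c q(2)] gt True by auto
    ultimately show ?thesis unfolding local_lift_def using True by (auto intro: the1_equality)
  next
    case False
    then show ?thesis
      using q(1) unfolding local_lift_def ordered_conf_def by (auto simp: PiE_def extensional_def)
  qed
qed

lemma continuous_on_local_lift:
  assumes g: "pathin (conf_space n) g" and I: "I \<subseteq> {0..1}" and gI: "\<And>t. t \<in> I \<Longrightarrow> g t \<in> near_conf n c"
    and c: "c \<in> topspace (conf_space n)"
    and q: "q \<in> ordered_conf n" "q ` {..<n} \<in> near_conf n c" and j: "j < n"
  shows "continuous_on I (\<lambda>t. local_lift n g c q t j)"
  unfolding continuous_on_open_invariant
proof (intro allI impI)
  fix B :: "(real \<times> real) set" assume B: "open B"
  define Z where "Z = square (nearest_point c (q j)) (separation_radius c)"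
  define W where "W = {S \<in> topspace (conf_space n). S \<inter> (Z \<inter> B) \<noteq> {}}"
  have "openin (conf_space n) W"
    unfolding W_def Z_def by (intro openin_conf_space_meeting open_Int open_square B)
  then have "openin (top_of_set {0..1}) {t \<in> {0..1}. g t \<in> W}"
    using openin_continuous_map_preimage[OF g[unfolded pathin_def]] by simp
  then obtain A where A: "open A" "{t \<in> {0..1}. g t \<in> W} = {0..1} \<inter> A"
    unfolding openin_open by auto
  have "t \<in> A \<longleftrightarrow> local_lift n g c q t j \<in> B" if t: "t \<in> I" for t
  proof -
    have gt: "g t \<in> near_conf n c" using gI t by auto
    have lift: "local_lift n g c q t j \<in> g t" "local_lift n g c q t j \<in> Z"
      using local_lift(3,4)[of c n q g t j] c q gt j unfolding Z_def by auto
    have uniq: "\<exists>!w. w \<in> g t \<and> w \<in> Z"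
      using near_conf_squares(1)[OF c gt nearest_point(1)[OF c q(2)]] j unfolding Z_def by auto
    have "t \<in> A \<longleftrightarrow> g t \<in> W" using A(2) t I by blast
    also have "\<dots> \<longleftrightarrow> local_lift n g c q t j \<in> B"
    proof
      assume "g t \<in> W"
      then obtain w where "w \<in> g t" "w \<in> Z" "w \<in> B" unfolding W_def by auto
      with uniq lift show "local_lift n g c q t j \<in> B" by auto
    next
      assume "local_lift n g c q t j \<in> B"
      then show "g t \<in> W" unfolding W_def using lift gt by (auto simp: near_conf_def)
    qed
    finally show ?thesis .
  qed
  then show "\<exists>A. open A \<and> A \<inter> I = (\<lambda>t. local_lift n g c q t j) -` B \<inter> I"
    using A(1) by (intro exI[of _ A]) auto
qed

lemma path_subdivision_near_conf:
  assumes g: "pathin (conf_space n) g" and n: "1 \<le> n"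
  obtains N cs where "1 \<le> N" "\<And>k. k < N \<Longrightarrow> cs k \<in> topspace (conf_space n)"
    "\<And>k t. k < N \<Longrightarrow> t \<in> {real k / real N .. (real k + 1) / real N} \<Longrightarrow> g t \<in> near_conf n (cs k)"
proof -
  have gc: "continuous_map (top_of_set {0..1}) (conf_space n) g" using g unfolding pathin_def by simp
  have g01: "g t \<in> topspace (conf_space n)" if "t \<in> {0..1}" for t
    using gc that by (auto simp: continuous_map_def)
  have "\<exists>A. open A \<and> {t \<in> {0..1}. g t \<in> near_conf n c} = {0..1} \<inter> A"
    if "c \<in> topspace (conf_space n)" for c
    using openin_continuous_map_preimage[OF gc openin_near_conf[OF that n]] unfolding openin_open by auto
  then obtain A where A: "\<And>c. c \<in> topspace (conf_space n) \<Longrightarrow>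
      open (A c) \<and> {t \<in> {0..1}. g t \<in> near_conf n c} = {0..1} \<inter> A c"
    by metis
  have "t \<in> A (g t)" if "t \<in> {0..1}" for t
    using A[OF g01[OF that]] near_conf_self[OF g01[OF that]] that by blast
  then have cover: "{0..1} \<subseteq> \<Union>(A ` topspace (conf_space n))"
    using g01 by blast
  have ne: "A ` topspace (conf_space n) \<noteq> {}" using g01[of 0] by auto
  obtain \<delta> where "0 < \<delta>"
    and \<delta>: "\<And>T. T \<subseteq> {0..1} \<Longrightarrow> diameter T < \<delta> \<Longrightarrow> \<exists>B\<in>A ` topspace (conf_space n). T \<subseteq> B"
    by (rule Lebesgue_number_lemma[OF compact_Icc ne cover]) (use A in auto)
  obtain N :: nat where N: "1 / \<delta> < real N" using reals_Archimedean2 by blast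
  then have "0 < N" using \<open>0 < \<delta>\<close> by (metis divide_pos_pos of_nat_0 order.asym zero_less_one not_gr0)
  have "\<exists>c \<in> topspace (conf_space n). \<forall>t \<in> {real k / real N .. (real k + 1) / real N}. g t \<in> near_conf n c"
    if k: "k < N" for k
  proof -
    have "diameter {real k / real N .. (real k + 1) / real N} < \<delta>"
      using \<open>0 < \<delta>\<close> N by (auto simp: field_split_simps)
    then obtain c where c: "c \<in> topspace (conf_space n)" "{real k / real N .. (real k + 1) / real N} \<subseteq> A c"
      using \<delta>[OF piece_subset_unit[OF k]] by blast
    then show ?thesis using A[OF c(1)] piece_subset_unit[OF k] by blast
  qed
  then obtain cs where "\<And>k. k < N \<Longrightarrow> cs k \<in> topspace (conf_space n) \<and>
      (\<forall>t\<in>{real k / real N .. (real k + 1) / real N}. g t \<in> near_conf n (cs k))"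
    by metis
  then show ?thesis using that[of N cs] \<open>0 < N\<close> by auto
qed

lemma lifted_vertices:
  assumes g: "pathin (conf_space n) g" and p0: "p0 \<in> ordered_conf n" "p0 ` {..<n} = g 0"
    and N: "1 \<le> N" and cs: "\<And>k. k < N \<Longrightarrow> cs k \<in> topspace (conf_space n)"
    and near: "\<And>k t. k < N \<Longrightarrow> t \<in> {real k / real N .. (real k + 1) / real N} \<Longrightarrow> g t \<in> near_conf n (cs k)"
  obtains q where "q 0 = p0"
    "\<And>k. k \<le> N \<Longrightarrow> q k \<in> ordered_conf n \<and> q k ` {..<n} = g (real k / real N)"
    "\<And>k. q (Suc k) = local_lift n g (cs k) (q k) ((real k + 1) / real N)"
proof -
  define q where "q = rec_nat p0 (\<lambda>k p. local_lift n g (cs k) p ((real k + 1) / real N))"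
  have "q k \<in> ordered_conf n \<and> q k ` {..<n} = g (real k / real N)" if "k \<le> N" for k
    using that
  proof (induction k)
    case 0 then show ?case using p0 by (simp add: q_def)
  next
    case (Suc k)
    then have k: "k < N" and IH: "q k \<in> ordered_conf n" "q k ` {..<n} = g (real k / real N)" by auto
    have ends: "real k / real N \<in> {real k / real N .. (real k + 1) / real N}"
      "(real k + 1) / real N \<in> {real k / real N .. (real k + 1) / real N}"
      by (auto simp: divide_right_mono)
    show ?case
      using local_lift(1,2)[of "cs k" n "q k" g "(real k + 1) / real N"] cs[OF k] IH
        near[OF k ends(1)] near[OF k ends(2)]
      by (simp add: q_def add.commute)
  qed
  then show ?thesis using that[of q] by (simp add: q_def)
qed

lemma path_lift_in_squares:
  assumes g: "pathin (conf_space n) g" and n: "1 \<le> n"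
    and p0: "p0 \<in> ordered_conf n" "p0 ` {..<n} = g 0"
  obtains N \<gamma> ctr rad where "1 \<le> N"
    "\<And>j. j < n \<Longrightarrow> continuous_on {0..1} (\<lambda>t. \<gamma> t j)"
    "\<And>t. t \<in> {0..1} \<Longrightarrow> \<gamma> t \<in> ordered_conf n \<and> \<gamma> t ` {..<n} = g t"
    "\<gamma> 0 = p0"
    "\<And>k. k < N \<Longrightarrow> 0 < rad k"
    "\<And>k i j. k < N \<Longrightarrow> i < n \<Longrightarrow> j < n \<Longrightarrow> i \<noteq> j \<Longrightarrow> square (ctr k i) (rad k) \<inter> square (ctr k j) (rad k) = {}"
    "\<And>k t j. k < N \<Longrightarrow> real k / real N \<le> t \<Longrightarrow> t \<le> (real k + 1) / real N \<Longrightarrow> j < n \<Longrightarrow>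
       \<gamma> t j \<in> square (ctr k j) (rad k)"
proof -
  obtain N cs where N: "1 \<le> N" and cs: "\<And>k. k < N \<Longrightarrow> cs k \<in> topspace (conf_space n)"
    and near: "\<And>k t. k < N \<Longrightarrow> t \<in> {real k / real N .. (real k + 1) / real N} \<Longrightarrow> g t \<in> near_conf n (cs k)"
    using path_subdivision_near_conf[OF g n] by metis
  obtain q where q0: "q 0 = p0"
    and q: "\<And>k. k \<le> N \<Longrightarrow> q k \<in> ordered_conf n \<and> q k ` {..<n} = g (real k / real N)"
    and qSuc: "\<And>k. q (Suc k) = local_lift n g (cs k) (q k) ((real k + 1) / real N)"
    by (rule lifted_vertices[OF g p0 N, of cs]) (use cs near in auto)
  have Npos: "0 < real N" using N by simp
  have qnear: "q k ` {..<n} \<in> near_conf n (cs k)" if k: "k < N" for k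
    using q[of k] k near[OF k, of "real k / real N"] by (auto simp: divide_right_mono)
  define f where "f = (\<lambda>k s. local_lift n g (cs k) (q k) ((real k + s) / real N))"
  define \<gamma> where "\<gamma> = join_pieces N f"
  have match: "f k 1 = f (Suc k) 0" if "Suc k < N" for k
    using local_lift_start[OF cs[OF that] _ qnear[OF that]] q[of "Suc k"] that
    unfolding f_def qSuc by (simp add: add.commute)
  have on_piece: "\<gamma> t = local_lift n g (cs k) (q k) t"
    if "k < N" "real k / real N \<le> t" "t \<le> (real k + 1) / real N" for k t
    using join_pieces_on_piece[of k N t f, OF that match] Npos unfolding \<gamma>_def f_def by (simp add: field_simps)
  have lift: "\<gamma> t \<in> ordered_conf n" "\<gamma> t ` {..<n} = g t"
    "\<And>j. j < n \<Longrightarrow> \<gamma> t j \<in> square (nearest_point (cs k) (q k j)) (separation_radius (cs k))"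
    if "k < N" "real k / real N \<le> t" "t \<le> (real k + 1) / real N" for k t
    using local_lift(1-3)[OF cs[OF that(1)] _ qnear[OF that(1)] near[OF that(1)]]
      q[of k] that on_piece[OF that] by auto
  show ?thesis
  proof (rule that[of N \<gamma> "\<lambda>k. separation_radius (cs k)" "\<lambda>k j. nearest_point (cs k) (q k j)"])
    fix j assume j: "j < n"
    have "continuous_on {0..1} (\<lambda>s. f k s j)" if k: "k < N" for k
    proof -
      have "continuous_on {real k / real N .. (real k + 1) / real N} (\<lambda>t. local_lift n g (cs k) (q k) t j)"
        using continuous_on_local_lift[OF g piece_subset_unit[OF k] _ cs[OF k] _ qnear[OF k] j]
          near[OF k] q[of k] k by auto
      then show ?thesis unfolding f_def
        by (rule continuous_on_compose2) (use Npos in \<open>auto intro!: continuous_intros simp: field_split_simps\<close>)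
    qed
    then have "continuous_on {0..1} (join_pieces N (\<lambda>k s. f k s j))"
      using match by (intro continuous_on_join_pieces[OF N]) auto
    then show "continuous_on {0..1} (\<lambda>t. \<gamma> t j)" unfolding \<gamma>_def join_pieces_def by simp
  next
    fix t :: real assume "t \<in> {0..1}"
    then show "\<gamma> t \<in> ordered_conf n \<and> \<gamma> t ` {..<n} = g t"
      using lift(1,2) piece_index_param[OF N] by (meson atLeastAtMost_iff)
  next
    show "\<gamma> 0 = p0" using on_piece[of 0 0] local_lift_start[OF cs _ qnear, of 0] N q[of 0] q0 p0 by simp
  next
    fix k i j assume "k < N" "i < n" "j < n" "i \<noteq> j"
    then show "square (nearest_point (cs k) (q k i)) (separation_radius (cs k))
        \<inter> square (nearest_point (cs k) (q k j)) (separation_radius (cs k)) = {}"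
      using disjoint_nearest_squares[OF cs _ qnear] q by auto
  qed (use N separation_radius(1) finite_conf_space_elem(1) cs lift(3) in auto)
qed

section \<open>Moving points from the bar onto the stem\<close>

definition squash :: "real \<Rightarrow> real" where
  "squash x = x / (1 + \<bar>x\<bar>)"

definition leg_height :: "real \<Rightarrow> real" where
  "leg_height y = (1 + squash y) / 2"

lemma squash_strict_mono: "x < y \<Longrightarrow> squash x < squash y"
proof -
  assume "x < y"
  have "x * (1 + \<bar>y\<bar>) < y * (1 + \<bar>x\<bar>)"
    using \<open>x < y\<close> by (cases "0 \<le> x"; cases "0 \<le> y")
      (auto simp: algebra_simps abs_if mult_less_cancel_left,
       (smt (verit) mult_nonneg_nonneg mult_le_0_iff)+)
  then show ?thesis
    unfolding squash_def by (simp add: divide_less_eq less_divide_eq mult.commute add_pos_nonneg)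
qed

lemma abs_squash_less_one: "\<bar>squash x\<bar> < 1"
  unfolding squash_def by (auto simp: abs_div divide_less_eq)

lemma continuous_on_squash: "continuous_on S squash"
  unfolding squash_def by (intro continuous_intros) (auto simp: add_pos_nonneg)

lemma squash_diff_mult_pos: "x \<noteq> y \<Longrightarrow> 0 < (x - y) * (squash x - squash y)"
  using squash_strict_mono[of x y] squash_strict_mono[of y x]
  by (cases "x < y") (auto simp: mult_neg_neg)

lemma leg_height_strict_mono: "x < y \<Longrightarrow> leg_height x < leg_height y"
  unfolding leg_height_def using squash_strict_mono by auto

lemma leg_height_pos: "0 < leg_height y" and leg_height_le_one: "leg_height y \<le> 1"
  unfolding leg_height_def using abs_squash_less_one[of y] by auto

text \<open>
  \<open>climb_motion n x y\<close> carries the points \<open>(squash (x j), 0)\<close> of the bar to the points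
  \<open>(0, leg_height (y j))\<close> of the stem, in the rescaled time \<open>\<tau> \<in> [0, n + 1]\<close>. During
  \<open>[0, 1]\<close> the bar configuration shrinks by the factor \<open>shrink_factor n x y\<close>; then,
  translated so that the point due to climb sits at the junction, the points climb one at a
  time, highest \<open>y\<close> first. The factor is so small that horizontal displacements never
  outweigh vertical ones, which keeps the motion aligned with the configuration \<open>(x j, y j)\<close>.\<close>

definition rank_above :: "nat \<Rightarrow> (nat \<Rightarrow> real) \<Rightarrow> nat \<Rightarrow> nat" where
  "rank_above n y j = card {i. i < n \<and> y j < y i}"

definition climb_time :: "nat \<Rightarrow> (nat \<Rightarrow> real) \<Rightarrow> nat \<Rightarrow> real" where
  "climb_time n y j = real (rank_above n y j) + 3/2"

definition climb_weight :: "nat \<Rightarrow> (nat \<Rightarrow> real) \<Rightarrow> nat \<Rightarrow> real \<Rightarrow> real" where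
  "climb_weight n y j \<tau> = max 0 (min 1 (2 - 4 * \<bar>\<tau> - climb_time n y j\<bar>))"

definition junction_coord :: "nat \<Rightarrow> (nat \<Rightarrow> real) \<Rightarrow> (nat \<Rightarrow> real) \<Rightarrow> real \<Rightarrow> real" where
  "junction_coord n x y \<tau> = (\<Sum>i<n. climb_weight n y i \<tau> * squash (x i))"

definition bar_coord :: "nat \<Rightarrow> (nat \<Rightarrow> real) \<Rightarrow> (nat \<Rightarrow> real) \<Rightarrow> real \<Rightarrow> nat \<Rightarrow> real \<Rightarrow> real" where
  "bar_coord n x y c j \<tau> =
     (1 - min 1 \<tau>) * squash (x j) + min 1 \<tau> * c * (squash (x j) - junction_coord n x y \<tau>)"

definition climb_track :: "nat \<Rightarrow> (nat \<Rightarrow> real) \<Rightarrow> (nat \<Rightarrow> real) \<Rightarrow> real \<Rightarrow> nat \<Rightarrow> real \<Rightarrow> real \<times> real" where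
  "climb_track n x y c j \<tau> =
     (if \<tau> \<le> climb_time n y j then (bar_coord n x y c j \<tau>, 0)
      else (0, leg_height (y j) * min 1 (4 * (\<tau> - climb_time n y j))))"

definition shrink_factor :: "nat \<Rightarrow> (nat \<Rightarrow> real) \<Rightarrow> (nat \<Rightarrow> real) \<Rightarrow> real" where
  "shrink_factor n x y = Min (insert (1 / (1 + real n))
     {leg_height (y i) * (y i - y k) / ((1 + real n) * (\<bar>x i - x k\<bar> + 1)) | i k.
        i < n \<and> k < n \<and> y k < y i}) / 2"

definition climb_motion :: "nat \<Rightarrow> (nat \<Rightarrow> real) \<Rightarrow> (nat \<Rightarrow> real) \<Rightarrow> real \<Rightarrow> nat \<Rightarrow> real \<times> real" where
  "climb_motion n x y s =
     restrict (\<lambda>j. climb_track n x y (shrink_factor n x y) j ((real n + 1) * s)) {..<n}"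

lemma shrink_factor_bounds:
  shows "0 < shrink_factor n x y" "shrink_factor n x y * (1 + real n) \<le> 1"
    and "\<And>i k. i < n \<Longrightarrow> k < n \<Longrightarrow> y k < y i \<Longrightarrow>
          shrink_factor n x y * (1 + real n) * \<bar>x i - x k\<bar> < leg_height (y i) * (y i - y k)"
proof -
  define E where "E = {leg_height (y i) * (y i - y k) / ((1 + real n) * (\<bar>x i - x k\<bar> + 1)) | i k.
     i < n \<and> k < n \<and> y k < y i}"
  have "E \<subseteq> (\<lambda>(i,k). leg_height (y i) * (y i - y k) / ((1 + real n) * (\<bar>x i - x k\<bar> + 1)))
      ` ({..<n} \<times> {..<n})"
    unfolding E_def by auto
  then have finE: "finite E" by (rule finite_subset) auto
  have Epos: "0 < e" if "e \<in> E" for e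
    using that leg_height_pos unfolding E_def by (auto intro!: divide_pos_pos mult_pos_pos)
  define M where "M = Min (insert (1 / (1 + real n)) E)"
  have lam: "shrink_factor n x y = M / 2" unfolding shrink_factor_def M_def E_def by simp
  have Mpos: "0 < M" unfolding M_def using finE Epos by (auto simp: Min_gr_iff)
  have Mle: "M \<le> 1 / (1 + real n)" unfolding M_def using finE by auto
  have MleE: "M \<le> e" if "e \<in> E" for e unfolding M_def using finE that by auto
  show "0 < shrink_factor n x y" using Mpos lam by simp
  have "M * (1 + real n) \<le> 1" using Mle by (simp add: le_divide_eq mult.commute)
  moreover have "shrink_factor n x y * (1 + real n) = M * (1 + real n) / 2" using lam by simp
  ultimately show "shrink_factor n x y * (1 + real n) \<le> 1" using Mpos by linarith
  fix i k assume ik: "i < n" "k < n" "y k < y i"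
  define d where "d = \<bar>x i - x k\<bar>"
  define h where "h = leg_height (y i) * (y i - y k)"
  have "0 < h" unfolding h_def using ik leg_height_pos by auto
  have "M \<le> h / ((1 + real n) * (d + 1))"
    using MleE ik unfolding E_def h_def d_def by blast
  then have "M * (1 + real n) * d + M * (1 + real n) \<le> h"
    by (simp add: le_divide_eq d_def add_pos_nonneg algebra_simps)
  then have "M * (1 + real n) * d \<le> h" using Mpos by (smt (verit) mult_pos_pos of_nat_0_le_iff)
  moreover have "shrink_factor n x y * (1 + real n) * d = M * (1 + real n) * d / 2"
    using lam by simp
  ultimately show "shrink_factor n x y * (1 + real n) * \<bar>x i - x k\<bar> < leg_height (y i) * (y i - y k)"
    using \<open>0 < h\<close> unfolding d_def h_def by linarith
qed

lemma rank_above_less: "j < n \<Longrightarrow> rank_above n y j < n"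
proof -
  assume "j < n"
  have "{i. i < n \<and> y j < y i} \<subseteq> {..<n} - {j}" by auto
  then have "rank_above n y j \<le> card ({..<n} - {j})" unfolding rank_above_def by (intro card_mono) auto
  then show ?thesis using \<open>j < n\<close> by simp
qed

lemma rank_above_strict_antimono:
  "i < n \<Longrightarrow> k < n \<Longrightarrow> y k < y i \<Longrightarrow> rank_above n y i < rank_above n y k"
proof -
  assume "i < n" "k < n" "y k < y i"
  then have "{l. l < n \<and> y i < y l} \<subset> {l. l < n \<and> y k < y l}" by auto
  then show ?thesis unfolding rank_above_def by (intro psubset_card_mono) auto
qed

lemma rank_above_less_iff:
  assumes "inj_on y {..<n}" "i < n" "k < n"
  shows "rank_above n y i < rank_above n y k \<longleftrightarrow> y k < y i"
proof
  assume less: "rank_above n y i < rank_above n y k"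
  then have "y i \<noteq> y k" using assms by (auto dest: inj_onD)
  then show "y k < y i" using rank_above_strict_antimono[of k n i y] assms less by force
qed (use rank_above_strict_antimono assms in auto)

lemma climb_time_separated:
  assumes "inj_on y {..<n}" "i < n" "k < n" "i \<noteq> k"
  shows "1 \<le> \<bar>climb_time n y i - climb_time n y k\<bar>"
proof -
  have "y i \<noteq> y k" using assms by (auto dest: inj_onD)
  then have "rank_above n y i \<noteq> rank_above n y k"
    using rank_above_less_iff[OF assms(1,2,3)] rank_above_less_iff[OF assms(1,3,2)] by force
  then show ?thesis unfolding climb_time_def by (cases "rank_above n y i < rank_above n y k") auto
qed

lemma climb_time_ge: "3/2 \<le> climb_time n y j"
  unfolding climb_time_def by simp

lemma climb_time_le: "j < n \<Longrightarrow> climb_time n y j \<le> real n + 1/2"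
  using rank_above_less[of j n y] unfolding climb_time_def by simp

lemma junction_coord_near_climb_time:
  assumes "inj_on y {..<n}" "j < n" "\<bar>\<tau> - climb_time n y j\<bar> \<le> 1/4"
  shows "junction_coord n x y \<tau> = squash (x j)"
proof -
  have "climb_weight n y i \<tau> = 0" if "i < n" "i \<noteq> j" for i
  proof -
    have "1 \<le> \<bar>climb_time n y i - climb_time n y j\<bar>" using climb_time_separated assms that by blast
    then have "3/4 \<le> \<bar>\<tau> - climb_time n y i\<bar>" using assms(3) by linarith
    then show ?thesis unfolding climb_weight_def by simp
  qed
  moreover have "climb_weight n y j \<tau> = 1" unfolding climb_weight_def using assms(3) by simp
  ultimately show ?thesis unfolding junction_coord_def
    using assms(2) by (subst sum.remove[of _ j]) (auto intro!: sum.neutral)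
qed

lemma abs_junction_coord_le: "\<bar>junction_coord n x y \<tau>\<bar> \<le> real n"
proof -
  have "\<bar>junction_coord n x y \<tau>\<bar> \<le> (\<Sum>i<n. \<bar>climb_weight n y i \<tau> * squash (x i)\<bar>)"
    unfolding junction_coord_def by (rule sum_abs)
  also have "\<dots> \<le> (\<Sum>i<n. 1)"
  proof (rule sum_mono)
    fix i
    have "\<bar>climb_weight n y i \<tau>\<bar> \<le> 1" unfolding climb_weight_def by simp
    moreover have "\<bar>squash (x i)\<bar> \<le> 1" using abs_squash_less_one[of "x i"] by simp
    ultimately show "\<bar>climb_weight n y i \<tau> * squash (x i)\<bar> \<le> 1" by (simp add: abs_mult mult_le_one)
  qed
  finally show ?thesis by simp
qed

lemma abs_squash_minus_junction_coord_le: "\<bar>squash (x j) - junction_coord n x y \<tau>\<bar> \<le> 1 + real n"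
  using abs_squash_less_one[of "x j"] abs_junction_coord_le[of n x y \<tau>] by linarith

lemma continuous_on_climb_track:
  assumes "inj_on y {..<n}" "j < n"
  shows "continuous_on S (climb_track n x y c j)"
proof -
  have "bar_coord n x y c j (climb_time n y j) = 0"
    using junction_coord_near_climb_time[OF assms, of "climb_time n y j" x] climb_time_ge[of n y j]
    unfolding bar_coord_def by simp
  then have "continuous_on UNIV (climb_track n x y c j)"
    unfolding climb_track_def bar_coord_def junction_coord_def climb_weight_def
    by (intro continuous_on_cases_1 continuous_intros continuous_on_squash) auto
  then show ?thesis by (rule continuous_on_subset) auto
qed

lemma climb_track_in_T_graph:
  assumes "0 \<le> \<tau>"
  shows "climb_track n x y (shrink_factor n x y) j \<tau> \<in> T_graph"
proof (cases "\<tau> \<le> climb_time n y j")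
  case True
  define m where "m = min 1 \<tau>"
  define l where "l = shrink_factor n x y"
  have m: "0 \<le> m" "m \<le> 1" using assms unfolding m_def by auto
  have l: "0 < l" "l * (1 + real n) \<le> 1" using shrink_factor_bounds unfolding l_def by auto
  have "\<bar>bar_coord n x y l j \<tau>\<bar> \<le> \<bar>(1 - m) * squash (x j)\<bar> + \<bar>m * l * (squash (x j) - junction_coord n x y \<tau>)\<bar>"
    unfolding bar_coord_def m_def[symmetric] by (rule abs_triangle_ineq)
  also have "\<dots> = (1 - m) * \<bar>squash (x j)\<bar> + m * (l * \<bar>squash (x j) - junction_coord n x y \<tau>\<bar>)"
    using m l by (simp add: abs_mult)
  also have "\<dots> \<le> (1 - m) * 1 + m * (l * (1 + real n))"
    using m l abs_squash_less_one[of "x j"] abs_squash_minus_junction_coord_le[of x j n y \<tau>]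
    by (intro add_mono mult_left_mono) auto
  also have "\<dots> \<le> 1" using m l by (smt (verit) mult_left_le)
  finally show ?thesis using True unfolding climb_track_def T_graph_def l_def by auto
next
  case False
  have "0 \<le> leg_height (y j) * min 1 (4 * (\<tau> - climb_time n y j))"
       "leg_height (y j) * min 1 (4 * (\<tau> - climb_time n y j)) \<le> 1"
    using False leg_height_pos[of "y j"] leg_height_le_one[of "y j"] by (auto intro: mult_le_one)
  then show ?thesis using False unfolding climb_track_def T_graph_def by auto
qed

abbreviation climb_chord :: "nat \<Rightarrow> (nat \<Rightarrow> real) \<Rightarrow> (nat \<Rightarrow> real) \<Rightarrow> nat \<Rightarrow> nat \<Rightarrow> real \<Rightarrow> real" where
  "climb_chord n x y i k \<tau> \<equiv> ((x i, y i) - (x k, y k)) \<bullet>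
     (climb_track n x y (shrink_factor n x y) i \<tau> - climb_track n x y (shrink_factor n x y) k \<tau>)"

lemma climb_chord_commute: "climb_chord n x y i k \<tau> = climb_chord n x y k i \<tau>"
  by (metis minus_diff_eq inner_minus_left inner_minus_right minus_minus)

lemma climb_chord_pos_on_bar:
  assumes "x i \<noteq> x k" "0 \<le> \<tau>" "\<tau> \<le> climb_time n y i" "\<tau> \<le> climb_time n y k"
  shows "0 < climb_chord n x y i k \<tau>"
proof -
  define m where "m = min 1 \<tau>"
  define l where "l = shrink_factor n x y"
  have "0 \<le> m" "m \<le> 1" "0 < l" using assms shrink_factor_bounds unfolding m_def l_def by auto
  then have pos: "0 < (1 - m) + m * l" by (cases "m = 0") (auto intro: add_nonneg_pos)
  have "climb_chord n x y i k \<tau> = (x i - x k) * (bar_coord n x y l i \<tau> - bar_coord n x y l k \<tau>)"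
    using assms unfolding climb_track_def l_def by simp
  also have "\<dots> = ((1 - m) + m * l) * ((x i - x k) * (squash (x i) - squash (x k)))"
    unfolding bar_coord_def m_def[symmetric] by (simp add: algebra_simps)
  also have "\<dots> > 0" using pos squash_diff_mult_pos[OF assms(1)] by simp
  finally show ?thesis .
qed

lemma climb_chord_pos_on_stem:
  assumes "inj_on y {..<n}" "i < n" "k < n" "y k < y i"
    and "climb_time n y i < \<tau>" "climb_time n y k < \<tau>"
  shows "0 < climb_chord n x y i k \<tau>"
proof -
  have "rank_above n y i < rank_above n y k" using rank_above_strict_antimono assms by blast
  then have "climb_time n y i + 1 \<le> climb_time n y k" unfolding climb_time_def by simp
  then have top: "min 1 (4 * (\<tau> - climb_time n y i)) = 1" using assms by auto
  have "leg_height (y k) * min 1 (4 * (\<tau> - climb_time n y k)) \<le> leg_height (y k)"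
    using leg_height_pos[of "y k"] by (simp add: mult_left_le)
  then have "0 < leg_height (y i) - leg_height (y k) * min 1 (4 * (\<tau> - climb_time n y k))"
    using leg_height_strict_mono[OF assms(4)] by linarith
  moreover have "climb_chord n x y i k \<tau>
     = (y i - y k) * (leg_height (y i) - leg_height (y k) * min 1 (4 * (\<tau> - climb_time n y k)))"
    using assms top unfolding climb_track_def by simp
  ultimately show ?thesis using assms(4) by simp
qed

text \<open>Right after i's climb the bar is
  centred at \<open>squash (x i)\<close>, so the horizontal term has the right sign; later the
  vertical term \<open>(y i - y k) * leg_height (y i)\<close> dominates by the choice of the shrink factor.\<close>
lemma climb_chord_pos_stem_bar:
  assumes "inj_on y {..<n}" "i < n" "k < n" "x i \<noteq> x k"
    and "climb_time n y i < \<tau>" "\<tau> \<le> climb_time n y k"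
  shows "0 < climb_chord n x y i k \<tau>"
proof -
  define l where "l = shrink_factor n x y"
  have l: "0 < l" using shrink_factor_bounds unfolding l_def by auto
  have "rank_above n y i < rank_above n y k" using assms unfolding climb_time_def by simp
  then have yik: "y k < y i" using rank_above_less_iff assms by blast
  have "1 \<le> \<tau>" using climb_time_ge[of n y i] assms by linarith
  then have bar: "bar_coord n x y l k \<tau> = l * (squash (x k) - junction_coord n x y \<tau>)"
    unfolding bar_coord_def by simp
  have chord: "climb_chord n x y i k \<tau> = (x i - x k) * (- bar_coord n x y l k \<tau>)
      + (y i - y k) * (leg_height (y i) * min 1 (4 * (\<tau> - climb_time n y i)))"
    using assms unfolding climb_track_def l_def by simp
  show ?thesis
  proof (cases "\<tau> \<le> climb_time n y i + 1/4")
    case True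
    have "junction_coord n x y \<tau> = squash (x i)"
      using junction_coord_near_climb_time[OF assms(1,2)] True assms(5) by auto
    then have "(x i - x k) * (- bar_coord n x y l k \<tau>) = l * ((x i - x k) * (squash (x i) - squash (x k)))"
      unfolding bar by (simp add: algebra_simps)
    also have "\<dots> > 0" using l squash_diff_mult_pos[OF assms(4)] by simp
    finally have "0 < (x i - x k) * (- bar_coord n x y l k \<tau>)" .
    moreover have "0 < (y i - y k) * (leg_height (y i) * min 1 (4 * (\<tau> - climb_time n y i)))"
      using leg_height_pos assms(5) yik by auto
    ultimately show ?thesis using chord by linarith
  next
    case False
    then have top: "min 1 (4 * (\<tau> - climb_time n y i)) = 1" by auto
    have "\<bar>bar_coord n x y l k \<tau>\<bar> \<le> l * (1 + real n)"
      unfolding bar using l abs_squash_minus_junction_coord_le[of x k n y \<tau>] by (simp add: abs_mult)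
    then have "\<bar>(x i - x k) * (- bar_coord n x y l k \<tau>)\<bar> \<le> \<bar>x i - x k\<bar> * (l * (1 + real n))"
      by (simp add: abs_mult mult_left_mono)
    moreover have "l * (1 + real n) * \<bar>x i - x k\<bar> < leg_height (y i) * (y i - y k)"
      using shrink_factor_bounds(3)[OF assms(2,3) yik] unfolding l_def .
    ultimately show ?thesis using chord top by (simp add: algebra_simps)
  qed
qed

lemma climb_chord_pos:
  assumes "inj_on x {..<n}" "inj_on y {..<n}" "i < n" "k < n" "i \<noteq> k" "0 \<le> \<tau>"
  shows "0 < climb_chord n x y i k \<tau>"
proof -
  have x: "x i \<noteq> x k" and y: "y i \<noteq> y k" using assms by (auto dest: inj_onD)
  consider "\<tau> \<le> climb_time n y i" "\<tau> \<le> climb_time n y k"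
    | "climb_time n y i < \<tau>" "climb_time n y k < \<tau>"
    | "climb_time n y i < \<tau>" "\<tau> \<le> climb_time n y k"
    | "\<tau> \<le> climb_time n y i" "climb_time n y k < \<tau>"
    by linarith
  then show ?thesis
  proof cases
    case 1 then show ?thesis using climb_chord_pos_on_bar x assms by blast
  next
    case 2
    show ?thesis
    proof (cases "y k < y i")
      case True then show ?thesis using climb_chord_pos_on_stem 2 assms by blast
    next
      case False
      then have "y i < y k" using y by auto
      then show ?thesis
        using climb_chord_pos_on_stem[of y n k i \<tau> x] 2 assms climb_chord_commute by metis
    qed
  next
    case 3 then show ?thesis using climb_chord_pos_stem_bar x assms by blast
  next
    case 4 then show ?thesis
      using climb_chord_pos_stem_bar[of y n k i x \<tau>] x assms climb_chord_commute by metis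
  qed
qed

lemma aligned_climb_motion:
  assumes "inj_on x {..<n}" "inj_on y {..<n}" "0 \<le> s"
  shows "aligned n (\<lambda>j. (x j, y j)) (climb_motion n x y s)"
  unfolding aligned_def climb_motion_def using climb_chord_pos[OF assms(1,2)] assms(3) by simp

lemma continuous_on_climb_motion:
  assumes "inj_on y {..<n}" "j < n"
  shows "continuous_on S (\<lambda>s. climb_motion n x y s j)"
proof -
  have "continuous_on S (\<lambda>s. climb_track n x y (shrink_factor n x y) j ((real n + 1) * s))"
    by (rule continuous_on_compose2[OF continuous_on_climb_track[OF assms, of UNIV]])
      (auto intro!: continuous_intros)
  then show ?thesis unfolding climb_motion_def using assms by simp
qed

lemma climb_motion_0: "j < n \<Longrightarrow> climb_motion n x y 0 j = (squash (x j), 0)"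
  using climb_time_ge[of n y j] unfolding climb_motion_def climb_track_def bar_coord_def by simp

lemma climb_motion_1: "j < n \<Longrightarrow> climb_motion n x y 1 j = (0, leg_height (y j))"
  using climb_time_le[of j n y] unfolding climb_motion_def climb_track_def by simp

lemma climb_motion_in_T_graph: "0 \<le> s \<Longrightarrow> j < n \<Longrightarrow> climb_motion n x y s j \<in> T_graph"
  unfolding climb_motion_def using climb_track_in_T_graph by simp

section \<open>Staircases and their shadows in T\<close>

lemma distinct_points_in_intervals:
  fixes n :: nat
  assumes "\<And>j. j < n \<Longrightarrow> (a j :: real) < b j"
  shows "\<exists>x. inj_on x {..<n} \<and> (\<forall>j<n. a j < x j \<and> x j < b j)"
  using assms
proof (induction n)
  case 0 then show ?case by auto
next
  case (Suc n)
  then obtain x where x: "inj_on x {..<n}" "\<forall>j<n. a j < x j \<and> x j < b j" by auto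
  have "infinite ({a n<..<b n} - x ` {..<n})"
    using Suc.prems infinite_Ioo by (simp add: Diff_infinite_finite)
  then obtain v where v: "v \<in> {a n<..<b n}" "v \<notin> x ` {..<n}"
    by (metis Diff_iff ex_in_conv finite.emptyI)
  have "inj_on (x(n := v)) {..<Suc n}"
    using x(1) v(2) by (auto simp: inj_on_def lessThan_Suc)
  moreover have "\<forall>j<Suc n. a j < (x(n := v)) j \<and> (x(n := v)) j < b j"
    using x(2) v(1) by (auto simp: less_Suc_eq)
  ultimately show ?case by blast
qed

text \<open>
  In the five phases of \<open>staircase_step\<close> and \<open>tree_step\<close>, the tree shadow sits on the bar
  during the vertical phases 0 and 4 (ordered by abscissa) and on the stem during the
  horizontal phase 2 (ordered by height); it climbs during phase 1 and descends during phase 3.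
  At the two ends of the loop, whose vertices already lie on the bar, it interpolates between
  \<open>x\<close> and \<open>squash x\<close>.\<close>

definition staircase_step :: "(nat \<Rightarrow> nat \<Rightarrow> real \<times> real) \<Rightarrow> (nat \<Rightarrow> nat \<Rightarrow> real)
    \<Rightarrow> nat \<Rightarrow> nat \<Rightarrow> real \<Rightarrow> nat \<Rightarrow> real \<times> real" where
  "staircase_step w ys k ph s j =
    (if ph = 0 then (fst (w k j), (1 - s) * snd (w k j) + s * ys k j)
     else if ph = 1 then (fst (w k j), ys k j)
     else if ph = 2 then ((1 - s) * fst (w k j) + s * fst (w (Suc k) j), ys k j)
     else if ph = 3 then (fst (w (Suc k) j), ys k j)
     else (fst (w (Suc k) j), (1 - s) * ys k j + s * snd (w (Suc k) j)))"

definition tree_step :: "nat \<Rightarrow> nat \<Rightarrow> (nat \<Rightarrow> nat \<Rightarrow> real \<times> real) \<Rightarrow> (nat \<Rightarrow> nat \<Rightarrow> real)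
    \<Rightarrow> nat \<Rightarrow> nat \<Rightarrow> real \<Rightarrow> nat \<Rightarrow> real \<times> real" where
  "tree_step n N w ys k ph s j =
    (if ph = 0 then
       (if k = 0 then ((1 - s) * fst (w k j) + s * squash (fst (w k j)), 0)
        else (squash (fst (w k j)), 0))
     else if ph = 1 then climb_motion n (\<lambda>i. fst (w k i)) (ys k) s j
     else if ph = 2 then (0, leg_height (ys k j))
     else if ph = 3 then climb_motion n (\<lambda>i. fst (w (Suc k) i)) (ys k) (1 - s) j
     else if Suc k = N then ((1 - s) * squash (fst (w (Suc k) j)) + s * fst (w (Suc k) j), 0)
     else (squash (fst (w (Suc k) j)), 0))"

definition staircase :: "nat \<Rightarrow> nat \<Rightarrow> (nat \<Rightarrow> nat \<Rightarrow> real \<times> real) \<Rightarrow> (nat \<Rightarrow> nat \<Rightarrow> real)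
    \<Rightarrow> real \<Rightarrow> nat \<Rightarrow> real \<times> real" where
  "staircase n N w ys t =
     restrict (\<lambda>j. join_pieces N (\<lambda>k. join_pieces 5 (\<lambda>ph r. staircase_step w ys k ph r j)) t) {..<n}"

definition tree_shadow :: "nat \<Rightarrow> nat \<Rightarrow> (nat \<Rightarrow> nat \<Rightarrow> real \<times> real) \<Rightarrow> (nat \<Rightarrow> nat \<Rightarrow> real)
    \<Rightarrow> real \<Rightarrow> nat \<Rightarrow> real \<times> real" where
  "tree_shadow n N w ys t =
     restrict (\<lambda>j. join_pieces N (\<lambda>k. join_pieces 5 (\<lambda>ph r. tree_step n N w ys k ph r j)) t) {..<n}"

definition staircase_data :: "nat \<Rightarrow> nat \<Rightarrow> (nat \<Rightarrow> nat \<Rightarrow> real \<times> real) \<Rightarrow> (nat \<Rightarrow> nat \<Rightarrow> real)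
    \<Rightarrow> (nat \<Rightarrow> nat \<Rightarrow> real \<times> real) \<Rightarrow> (nat \<Rightarrow> real) \<Rightarrow> bool" where
  "staircase_data n N w ys ctr rad \<longleftrightarrow> 1 \<le> N \<and>
     (\<forall>k\<le>N. inj_on (\<lambda>j. fst (w k j)) {..<n}) \<and>
     (\<forall>k<N. inj_on (ys k) {..<n}) \<and>
     (\<forall>k<N. \<forall>j<n. w k j \<in> square (ctr k j) (rad k) \<and> w (Suc k) j \<in> square (ctr k j) (rad k) \<and>
         ys k j \<in> {snd (ctr k j) - rad k <..< snd (ctr k j) + rad k}) \<and>
     (\<forall>j<n. snd (w 0 j) = 0 \<and> fst (w 0 j) \<in> {-1..1} \<and> snd (w N j) = 0 \<and> fst (w N j) \<in> {-1..1})"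

lemma phase_cases:
  obtains "ph = (0::nat)" | "ph = 1" | "ph = 2" | "ph = 3" | "ph \<noteq> 0 \<and> ph \<noteq> 1 \<and> ph \<noteq> 2 \<and> ph \<noteq> 3"
  by blast

lemma convex_combination_in_interval:
  assumes "a \<in> {l<..<u}" "b \<in> {l<..<u}" "0 \<le> s" "s \<le> 1"
  shows "(1 - s) * a + s * b \<in> {l<..<u::real}"
proof -
  have "(1 - s) *\<^sub>R a + s *\<^sub>R b \<in> {l<..<u}"
    using assms by (intro convexD) auto
  then show ?thesis by simp
qed

lemma staircase_step_in_square:
  assumes "staircase_data n N w ys ctr rad" "k < N" "j < n" "0 \<le> s" "s \<le> 1"
  shows "staircase_step w ys k ph s j \<in> square (ctr k j) (rad k)"
proof -
  have y: "ys k j \<in> {snd (ctr k j) - rad k <..< snd (ctr k j) + rad k}"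
    and "w k j \<in> square (ctr k j) (rad k)" "w (Suc k) j \<in> square (ctr k j) (rad k)"
    using assms unfolding staircase_data_def by auto
  then have "fst (w k j) \<in> {fst (ctr k j) - rad k <..< fst (ctr k j) + rad k}"
    "snd (w k j) \<in> {snd (ctr k j) - rad k <..< snd (ctr k j) + rad k}"
    "fst (w (Suc k) j) \<in> {fst (ctr k j) - rad k <..< fst (ctr k j) + rad k}"
    "snd (w (Suc k) j) \<in> {snd (ctr k j) - rad k <..< snd (ctr k j) + rad k}"
    by (auto simp: mem_square)
  then show ?thesis
    unfolding staircase_step_def mem_square
    using y convex_combination_in_interval[OF _ _ assms(4,5)] by auto
qed

lemma tree_step_in_T_graph:
  assumes "staircase_data n N w ys ctr rad" "k < N" "j < n" "0 \<le> s" "s \<le> 1"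
  shows "tree_step n N w ys k ph s j \<in> T_graph"
proof -
  have ends: "fst (w 0 j) \<in> {-1..1}" "fst (w N j) \<in> {-1..1}"
    using assms unfolding staircase_data_def by auto
  have squash: "squash a \<in> {-1..1}" for a using abs_squash_less_one[of a] by auto
  have mix: "(1 - s) * a + s * b \<in> {-1..1}" if "a \<in> {-1..1}" "b \<in> {-1..1}" for a b :: real
  proof -
    have "(1 - s) *\<^sub>R a + s *\<^sub>R b \<in> {-1..1}"
      using that assms(4,5) by (intro convexD) auto
    then show ?thesis by simp
  qed
  have on_bar: "(a, 0) \<in> T_graph" if "a \<in> {-1..1}" for a
    using that unfolding T_graph_def by auto
  have on_stem: "(0, leg_height y) \<in> T_graph" for y
    using leg_height_pos[of y] leg_height_le_one[of y] unfolding T_graph_def by auto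
  show ?thesis
    by (cases ph rule: phase_cases)
      (use on_bar on_stem squash mix ends climb_motion_in_T_graph assms(3-5) in
        \<open>auto simp: tree_step_def\<close>)
qed

lemma aligned_staircase_step_tree_step:
  assumes "staircase_data n N w ys ctr rad" "k < N" "0 \<le> s" "s \<le> 1"
  shows "aligned n (\<lambda>j. staircase_step w ys k ph s j) (\<lambda>j. tree_step n N w ys k ph s j)"
proof -
  have inj: "inj_on (\<lambda>j. fst (w k j)) {..<n}" "inj_on (\<lambda>j. fst (w (Suc k) j)) {..<n}"
    "inj_on (ys k) {..<n}"
    using assms unfolding staircase_data_def by auto
  have mono_start: "(1 - s) * a + s * squash a < (1 - s) * b + s * squash b" if "a < b" for a b
    using squash_strict_mono[OF that] that assms(3,4)
    by (smt (verit, best) mult_left_mono mult_strict_left_mono)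
  have mono_end: "(1 - s) * squash a + s * a < (1 - s) * squash b + s * b" if "a < b" for a b
    using squash_strict_mono[OF that] that assms(3,4)
    by (smt (verit, best) mult_left_mono mult_strict_left_mono)
  show ?thesis
  proof (cases ph rule: phase_cases)
    case 1
    then show ?thesis
      using aligned_fst_monotone[OF inj(1)] mono_start squash_strict_mono
      by (cases "k = 0") (simp_all add: staircase_step_def tree_step_def)
  next
    case 2
    then show ?thesis
      using aligned_climb_motion[OF inj(1,3) assms(3)]
      by (simp add: staircase_step_def tree_step_def)
  next
    case 3
    then show ?thesis
      using aligned_snd_monotone[OF inj(3)] leg_height_strict_mono
      by (simp add: staircase_step_def tree_step_def)
  next
    case 4
    then show ?thesis
      using aligned_climb_motion[OF inj(2,3), of "1 - s"] assms(4)
      by (simp add: staircase_step_def tree_step_def)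
  next
    case 5
    then show ?thesis
      using aligned_fst_monotone[OF inj(2)] mono_end squash_strict_mono
      by (cases "Suc k = N") (simp_all add: staircase_step_def tree_step_def)
  qed
qed

lemma continuous_on_staircase:
  assumes "staircase_data n N w ys ctr rad" "j < n"
  shows "continuous_on {0..1} (\<lambda>t. staircase n N w ys t j)"
proof -
  have N: "1 \<le> N" using assms unfolding staircase_data_def by auto
  have "continuous_on {0..1} (join_pieces 5 (\<lambda>ph r. staircase_step w ys k ph r j))" for k
  proof (rule continuous_on_join_pieces)
    show "continuous_on {0..1} (\<lambda>r. staircase_step w ys k ph r j)" for ph
      by (cases ph rule: phase_cases) (simp_all add: staircase_step_def continuous_intros)
    show "staircase_step w ys k ph 1 j = staircase_step w ys k (Suc ph) 0 j" if "Suc ph < 5" for ph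
      using that by (cases ph rule: phase_cases) (auto simp: staircase_step_def)
  qed simp
  then have "continuous_on {0..1} (join_pieces N (\<lambda>k. join_pieces 5 (\<lambda>ph r. staircase_step w ys k ph r j)))"
    by (rule continuous_on_join_pieces[OF N]) (simp add: join_pieces_1 join_pieces_0 staircase_step_def)
  then show ?thesis unfolding staircase_def using assms(2) by simp
qed

lemma continuous_on_tree_shadow:
  assumes "staircase_data n N w ys ctr rad" "j < n"
  shows "continuous_on {0..1} (\<lambda>t. tree_shadow n N w ys t j)"
proof -
  have N: "1 \<le> N" using assms unfolding staircase_data_def by auto
  have "continuous_on {0..1} (join_pieces 5 (\<lambda>ph r. tree_step n N w ys k ph r j))" if k: "k < N" for k
  proof (rule continuous_on_join_pieces)
    have inj: "inj_on (ys k) {..<n}" using assms k unfolding staircase_data_def by auto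
    have "continuous_on {0..1} (\<lambda>r. climb_motion n x (ys k) (1 - r) j)" for x
      by (rule continuous_on_compose2[OF continuous_on_climb_motion[OF inj assms(2), of UNIV]])
        (auto intro!: continuous_intros)
    then show "continuous_on {0..1} (\<lambda>r. tree_step n N w ys k ph r j)" for ph
      using continuous_on_climb_motion[OF inj assms(2)]
      by (cases ph rule: phase_cases; cases "k = 0"; cases "Suc k = N")
        (simp_all add: tree_step_def continuous_intros)
    show "tree_step n N w ys k ph 1 j = tree_step n N w ys k (Suc ph) 0 j" if "Suc ph < 5" for ph
      using that assms(2) climb_motion_0 climb_motion_1
      by (cases ph rule: phase_cases) (auto simp: tree_step_def)
  qed simp
  then have "continuous_on {0..1} (join_pieces N (\<lambda>k. join_pieces 5 (\<lambda>ph r. tree_step n N w ys k ph r j)))"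
    by (rule continuous_on_join_pieces[OF N]) (simp_all add: join_pieces_1 join_pieces_0 tree_step_def)
  then show ?thesis unfolding tree_shadow_def using assms(2) by simp
qed

lemma staircase_tree_shadow_at:
  assumes "staircase_data n N w ys ctr rad" "t \<in> {0..1}"
  obtains k ph r where "k < N" "real k / real N \<le> t" "t \<le> (real k + 1) / real N" "0 \<le> r" "r \<le> 1"
    "\<And>j. j < n \<Longrightarrow> staircase n N w ys t j = staircase_step w ys k ph r j"
    "\<And>j. j < n \<Longrightarrow> tree_shadow n N w ys t j = tree_step n N w ys k ph r j"
proof -
  have N: "1 \<le> N" using assms unfolding staircase_data_def by auto
  define k where "k = piece_index N t"
  define s where "s = piece_param N t"
  have k: "k < N" "real k / real N \<le> t" "t \<le> (real k + 1) / real N" "0 \<le> s" "s \<le> 1"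
    using piece_index_param[OF N] assms(2) unfolding k_def s_def by auto
  have "0 \<le> piece_param 5 s" "piece_param 5 s \<le> 1"
    using piece_index_param[of 5 s] k by auto
  then show ?thesis
    using that[OF k(1-3)] unfolding staircase_def tree_shadow_def join_pieces_def k_def s_def by simp
qed

lemma staircase_tree_shadow_ends:
  assumes "staircase_data n N w ys ctr rad" "j < n"
  shows "staircase n N w ys 0 j = w 0 j" "tree_shadow n N w ys 0 j = w 0 j"
    "staircase n N w ys 1 j = w N j" "tree_shadow n N w ys 1 j = w N j"
proof -
  have N: "1 \<le> N" and "snd (w 0 j) = 0" "snd (w N j) = 0"
    using assms unfolding staircase_data_def by auto
  moreover have "Suc (N - 1) = N" using N by simp
  ultimately show "staircase n N w ys 0 j = w 0 j" "tree_shadow n N w ys 0 j = w 0 j"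
    "staircase n N w ys 1 j = w N j" "tree_shadow n N w ys 1 j = w N j"
    unfolding staircase_def tree_shadow_def using assms(2)
    by (simp_all add: join_pieces_0 join_pieces_1 staircase_step_def tree_step_def prod_eq_iff)
qed

lemma distinct_abscissae_inner_vertices:
  fixes \<gamma> :: "real \<Rightarrow> nat \<Rightarrow> real \<times> real"
  assumes in_square: "\<And>k t j. k < N \<Longrightarrow> real k / real N \<le> t \<Longrightarrow> t \<le> (real k + 1) / real N \<Longrightarrow> j < n \<Longrightarrow>
      \<gamma> t j \<in> square (ctr k j) (rad k)"
  obtains X where "\<And>k. 0 < k \<Longrightarrow> k < N \<Longrightarrow> inj_on (X k) {..<n}"
    "\<And>k j. 0 < k \<Longrightarrow> k < N \<Longrightarrow> j < n \<Longrightarrow>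
       (X k j, snd (\<gamma> (real k / real N) j)) \<in> square (ctr k j) (rad k) \<inter> square (ctr (k - 1) j) (rad (k - 1))"
proof -
  define a where "a = (\<lambda>k j. max (fst (ctr (k - 1) j) - rad (k - 1)) (fst (ctr k j) - rad k))"
  define b where "b = (\<lambda>k j. min (fst (ctr (k - 1) j) + rad (k - 1)) (fst (ctr k j) + rad k))"
  have vertex: "\<gamma> (real k / real N) j \<in> square (ctr k j) (rad k)"
    "\<gamma> (real k / real N) j \<in> square (ctr (k - 1) j) (rad (k - 1))"
    if k: "0 < k" "k < N" and j: "j < n" for k j
    using in_square[OF k(2) _ _ j] in_square[of "k - 1" "real k / real N" j] k j
    by (simp_all add: divide_right_mono of_nat_diff)
  have "\<exists>x. inj_on x {..<n} \<and> (\<forall>j<n. a k j < x j \<and> x j < b k j)" if k: "0 < k" "k < N" for k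
  proof (rule distinct_points_in_intervals)
    fix j assume "j < n"
    with vertex[OF k this] show "a k j < b k j" by (auto simp: a_def b_def mem_square)
  qed
  then obtain X where X: "\<And>k. 0 < k \<Longrightarrow> k < N \<Longrightarrow> inj_on (X k) {..<n} \<and> (\<forall>j<n. a k j < X k j \<and> X k j < b k j)"
    by metis
  show ?thesis
  proof (rule that)
    show "inj_on (X k) {..<n}" if "0 < k" "k < N" for k using X[OF that] by blast
    show "(X k j, snd (\<gamma> (real k / real N) j)) \<in> square (ctr k j) (rad k) \<inter> square (ctr (k - 1) j) (rad (k - 1))"
      if "0 < k" "k < N" "j < n" for k j
      using vertex[OF that] X[OF that(1,2)] that(3) by (auto simp: a_def b_def mem_square)
  qed
qed

lemma staircase_data_exists:
  fixes \<gamma> :: "real \<Rightarrow> nat \<Rightarrow> real \<times> real"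
  assumes N: "1 \<le> N"
    and in_square: "\<And>k t j. k < N \<Longrightarrow> real k / real N \<le> t \<Longrightarrow> t \<le> (real k + 1) / real N \<Longrightarrow> j < n \<Longrightarrow>
      \<gamma> t j \<in> square (ctr k j) (rad k)"
    and rad: "\<And>k. k < N \<Longrightarrow> 0 < rad k"
    and inj: "inj_on (\<lambda>j. fst (\<gamma> 0 j)) {..<n}" "inj_on (\<lambda>j. fst (\<gamma> 1 j)) {..<n}"
    and bar: "\<And>j. j < n \<Longrightarrow> snd (\<gamma> 0 j) = 0 \<and> fst (\<gamma> 0 j) \<in> {-1..1} \<and> snd (\<gamma> 1 j) = 0 \<and> fst (\<gamma> 1 j) \<in> {-1..1}"
  obtains w ys where "staircase_data n N w ys ctr rad" "w 0 = \<gamma> 0" "w N = \<gamma> 1"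
proof -
  obtain X where X: "\<And>k. 0 < k \<Longrightarrow> k < N \<Longrightarrow> inj_on (X k) {..<n}"
    and X_square: "\<And>k j. 0 < k \<Longrightarrow> k < N \<Longrightarrow> j < n \<Longrightarrow>
       (X k j, snd (\<gamma> (real k / real N) j)) \<in> square (ctr k j) (rad k) \<inter> square (ctr (k - 1) j) (rad (k - 1))"
    using distinct_abscissae_inner_vertices[of N n \<gamma> ctr rad] in_square by blast
  have "\<exists>y. inj_on y {..<n} \<and> (\<forall>j<n. snd (ctr k j) - rad k < y j \<and> y j < snd (ctr k j) + rad k)"
    if "k < N" for k
    using rad[OF that] by (intro distinct_points_in_intervals) simp
  then obtain ys where ys: "\<And>k. k < N \<Longrightarrow> inj_on (ys k) {..<n} \<and>
      (\<forall>j<n. snd (ctr k j) - rad k < ys k j \<and> ys k j < snd (ctr k j) + rad k)"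
    by metis
  define w where "w = (\<lambda>k. if k = 0 then \<gamma> 0 else if k = N then \<gamma> 1
                           else (\<lambda>j. (X k j, snd (\<gamma> (real k / real N) j))))"
  have "0 < real N" using N by simp
  then have ends_in_square: "\<gamma> 0 j \<in> square (ctr 0 j) (rad 0)" "\<gamma> 1 j \<in> square (ctr (N - 1) j) (rad (N - 1))"
    if "j < n" for j
    using in_square[of 0 0 j] in_square[of "N - 1" 1 j] N that by (auto simp: of_nat_diff)
  have "staircase_data n N w ys ctr rad"
    unfolding staircase_data_def
  proof (intro conjI allI impI)
    show "inj_on (\<lambda>j. fst (w k j)) {..<n}" if "k \<le> N" for k
      using inj X[of k] that by (auto simp: w_def)
    show "w k j \<in> square (ctr k j) (rad k)" "w (Suc k) j \<in> square (ctr k j) (rad k)"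
      if "k < N" "j < n" for k j
      using X_square[of k j] X_square[of "Suc k" j] ends_in_square[of j] that
      by (auto simp: w_def)
  qed (use N ys bar in \<open>auto simp: w_def\<close>)
  then show ?thesis using that N by (simp add: w_def)
qed

lemma ordered_conf_on_bar:
  assumes "q \<in> ordered_conf n" "q ` {..<n} \<subseteq> {(x, 0) | x. -1 \<le> x \<and> x \<le> 1}"
  shows "inj_on (\<lambda>j. fst (q j)) {..<n}" "\<And>j. j < n \<Longrightarrow> snd (q j) = 0 \<and> fst (q j) \<in> {-1..1}"
proof -
  show bar: "snd (q j) = 0 \<and> fst (q j) \<in> {-1..1}" if "j < n" for j
    using assms(2) that by auto
  have "inj_on q {..<n}" using assms(1) unfolding ordered_conf_def by auto
  then show "inj_on (\<lambda>j. fst (q j)) {..<n}"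
    using bar unfolding inj_on_def by (metis prod_eq_iff lessThan_iff)
qed

lemma staircase_in_squares:
  assumes "staircase_data n N w ys ctr rad" "t \<in> {0..1}"
  obtains k where "k < N" "real k / real N \<le> t" "t \<le> (real k + 1) / real N"
    "\<And>j. j < n \<Longrightarrow> staircase n N w ys t j \<in> square (ctr k j) (rad k)"
proof -
  obtain k ph r where k: "k < N" "real k / real N \<le> t" "t \<le> (real k + 1) / real N" "0 \<le> r" "r \<le> 1"
    and eq: "\<And>j. j < n \<Longrightarrow> staircase n N w ys t j = staircase_step w ys k ph r j"
    using staircase_tree_shadow_at[OF assms] by metis
  show ?thesis
    using that[OF k(1-3)] eq staircase_step_in_square[OF assms(1) k(1) _ k(4,5)] by simp
qed

lemma aligned_staircase_tree_shadow:
  assumes "staircase_data n N w ys ctr rad" "t \<in> {0..1}"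
  shows "aligned n (staircase n N w ys t) (tree_shadow n N w ys t)"
proof -
  obtain k ph r where "k < N" "0 \<le> r" "r \<le> 1"
    and "\<And>j. j < n \<Longrightarrow> staircase n N w ys t j = staircase_step w ys k ph r j"
      "\<And>j. j < n \<Longrightarrow> tree_shadow n N w ys t j = tree_step n N w ys k ph r j"
    using staircase_tree_shadow_at[OF assms] by metis
  then show ?thesis
    using aligned_staircase_step_tree_step[OF assms(1)] by (blast intro: aligned_cong)
qed

lemma tree_shadow_in_ordered_conf:
  assumes "staircase_data n N w ys ctr rad" "t \<in> {0..1}"
  shows "tree_shadow n N w ys t \<in> ordered_conf n"
  using aligned_imp_inj_on(2)[OF aligned_staircase_tree_shadow[OF assms]]
  unfolding ordered_conf_def tree_shadow_def by simp

lemma tree_shadow_in_conf_T: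
  assumes "staircase_data n N w ys ctr rad" "t \<in> {0..1}"
  shows "tree_shadow n N w ys t ` {..<n} \<in> conf_T n"
proof -
  obtain k ph r where "k < N" "0 \<le> r" "r \<le> 1"
    and "\<And>j. j < n \<Longrightarrow> tree_shadow n N w ys t j = tree_step n N w ys k ph r j"
    using staircase_tree_shadow_at[OF assms] by metis
  then have "tree_shadow n N w ys t ` {..<n} \<subseteq> T_graph"
    using tree_step_in_T_graph[OF assms(1)] by auto
  then show ?thesis
    using tree_shadow_in_ordered_conf[OF assms] unfolding conf_T_def topspace_conf_space by auto
qed

lemma pathin_tree_shadow:
  assumes "staircase_data n N w ys ctr rad"
  shows "pathin (conf_space n) (\<lambda>t. tree_shadow n N w ys t ` {..<n})"
  unfolding pathin_def
  using continuous_on_tree_shadow[OF assms] tree_shadow_in_ordered_conf[OF assms]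
  by (intro continuous_map_conf_space) auto

lemma lift_homotopic_staircase:
  assumes data: "staircase_data n N w ys ctr rad" and w0: "w 0 = \<gamma> 0" and wN: "w N = \<gamma> 1"
    and cont: "\<And>j. j < n \<Longrightarrow> continuous_on {0..1} (\<lambda>t. \<gamma> t j)"
    and disj: "\<And>k i j. k < N \<Longrightarrow> i < n \<Longrightarrow> j < n \<Longrightarrow> i \<noteq> j \<Longrightarrow>
      square (ctr k i) (rad k) \<inter> square (ctr k j) (rad k) = {}"
    and in_square: "\<And>k t j. k < N \<Longrightarrow> real k / real N \<le> t \<Longrightarrow> t \<le> (real k + 1) / real N \<Longrightarrow> j < n \<Longrightarrow>
      \<gamma> t j \<in> square (ctr k j) (rad k)"
    and ends: "\<gamma> 0 ` {..<n} = x0" "\<gamma> 1 ` {..<n} = x0"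
  shows "homotopic_with (\<lambda>k. k 0 = x0 \<and> k 1 = x0) (top_of_set {0..1}) (conf_space n)
           (\<lambda>t. \<gamma> t ` {..<n}) (\<lambda>t. staircase n N w ys t ` {..<n})"
proof (rule homotopic_conf_space_by_affine_mix[OF cont continuous_on_staircase[OF data]])
  fix s t :: real assume "s \<in> {0..1}" "t \<in> {0..1}"
  moreover obtain k where "k < N" "real k / real N \<le> t" "t \<le> (real k + 1) / real N"
    "\<And>j. j < n \<Longrightarrow> staircase n N w ys t j \<in> square (ctr k j) (rad k)"
    using staircase_in_squares[OF data \<open>t \<in> {0..1}\<close>] by metis
  ultimately show "affine_mix n s (\<gamma> t) (staircase n N w ys t) \<in> ordered_conf n"
    using in_square disj convex_square
    by (intro affine_mix_in_ordered_conf_disjoint_convex[where B = "\<lambda>j. square (ctr k j) (rad k)"]) auto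
qed (use staircase_tree_shadow_ends[OF data] w0 wN ends in auto)

lemma staircase_homotopic_tree_shadow:
  assumes data: "staircase_data n N w ys ctr rad"
    and ends: "w 0 ` {..<n} = x0" "w N ` {..<n} = x0"
  shows "homotopic_with (\<lambda>k. k 0 = x0 \<and> k 1 = x0) (top_of_set {0..1}) (conf_space n)
           (\<lambda>t. staircase n N w ys t ` {..<n}) (\<lambda>t. tree_shadow n N w ys t ` {..<n})"
proof (rule homotopic_conf_space_by_affine_mix[OF continuous_on_staircase[OF data] continuous_on_tree_shadow[OF data]])
  show "affine_mix n s (staircase n N w ys t) (tree_shadow n N w ys t) \<in> ordered_conf n"
    if "s \<in> {0..1}" "t \<in> {0..1}" for s t
    using aligned_affine_mix_in_ordered_conf[OF aligned_staircase_tree_shadow[OF data that(2)]] that(1)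
    by simp
  have "staircase n N w ys 0 ` {..<n} = w 0 ` {..<n}" "staircase n N w ys 1 ` {..<n} = w N ` {..<n}"
    using staircase_tree_shadow_ends[OF data] by auto
  then show "staircase n N w ys 0 ` {..<n} = x0" "staircase n N w ys 1 ` {..<n} = x0"
    using ends by simp_all
qed (use staircase_tree_shadow_ends[OF data] in auto)

declare homotopic_with_trans [trans]

lemma loop_homotopic_staircase:
  assumes n: "1 \<le> n" and g: "pathin (conf_space n) g" and g01: "g 0 = x0" "g 1 = x0"
    and bar: "x0 \<subseteq> {(x, 0) | x. -1 \<le> x \<and> x \<le> 1}"
  obtains N w ys ctr rad where "staircase_data n N w ys ctr rad" "w 0 ` {..<n} = x0" "w N ` {..<n} = x0"
    "homotopic_with (\<lambda>k. k 0 = x0 \<and> k 1 = x0) (top_of_set {0..1}) (conf_space n)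
       g (\<lambda>t. staircase n N w ys t ` {..<n})"
proof -
  have "g 0 \<in> topspace (conf_space n)" using g unfolding pathin_def continuous_map_def by auto
  then obtain p0 where p0: "p0 \<in> ordered_conf n" "p0 ` {..<n} = g 0"
    by (rule conf_space_elemE) simp
  obtain N \<gamma> ctr rad where N: "1 \<le> N"
    and cont: "\<And>j. j < n \<Longrightarrow> continuous_on {0..1} (\<lambda>t. \<gamma> t j)"
    and lift: "\<And>t. t \<in> {0..1} \<Longrightarrow> \<gamma> t \<in> ordered_conf n \<and> \<gamma> t ` {..<n} = g t"
    and rad: "\<And>k. k < N \<Longrightarrow> 0 < rad k"
    and disj: "\<And>k i j. k < N \<Longrightarrow> i < n \<Longrightarrow> j < n \<Longrightarrow> i \<noteq> j \<Longrightarrow>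
      square (ctr k i) (rad k) \<inter> square (ctr k j) (rad k) = {}"
    and in_square: "\<And>k t j. k < N \<Longrightarrow> real k / real N \<le> t \<Longrightarrow> t \<le> (real k + 1) / real N \<Longrightarrow> j < n \<Longrightarrow>
      \<gamma> t j \<in> square (ctr k j) (rad k)"
    by (rule path_lift_in_squares[OF g n p0]) (rule that; assumption)
  have ends: "\<gamma> 0 ` {..<n} = x0" "\<gamma> 1 ` {..<n} = x0" using lift[of 0] lift[of 1] g01 by auto
  have bar0: "inj_on (\<lambda>j. fst (\<gamma> 0 j)) {..<n}" "\<And>j. j < n \<Longrightarrow> snd (\<gamma> 0 j) = 0 \<and> fst (\<gamma> 0 j) \<in> {-1..1}"
    using ordered_conf_on_bar[of "\<gamma> 0" n] lift[of 0] ends bar by auto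
  have bar1: "inj_on (\<lambda>j. fst (\<gamma> 1 j)) {..<n}" "\<And>j. j < n \<Longrightarrow> snd (\<gamma> 1 j) = 0 \<and> fst (\<gamma> 1 j) \<in> {-1..1}"
    using ordered_conf_on_bar[of "\<gamma> 1" n] lift[of 1] ends bar by auto
  obtain w ys where data: "staircase_data n N w ys ctr rad" and w0: "w 0 = \<gamma> 0" and wN: "w N = \<gamma> 1"
    by (rule staircase_data_exists[OF N in_square rad bar0(1) bar1(1)]) (use bar0 bar1 in auto)
  have "homotopic_with (\<lambda>k. k 0 = x0 \<and> k 1 = x0) (top_of_set {0..1}) (conf_space n) g (\<lambda>t. \<gamma> t ` {..<n})"
    using g g01 lift by (intro homotopic_with_equal) (auto simp: pathin_def ends)
  also have "homotopic_with (\<lambda>k. k 0 = x0 \<and> k 1 = x0) (top_of_set {0..1}) (conf_space n)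
      \<dots> (\<lambda>t. staircase n N w ys t ` {..<n})"
    by (rule lift_homotopic_staircase[OF data w0 wN cont disj in_square ends])
  finally show ?thesis
    using that[OF data] ends unfolding w0 wN by blast
qed

theorem mainTheorem1:
  fixes n :: nat and x0 :: "(real \<times> real) set"
  assumes "n \<ge> 1"
    and "x0 \<in> conf_T n"
    and "x0 \<subseteq> {(x, 0) | x. -1 \<le> x \<and> x \<le> 1}"
  shows "\<forall>g. pathin (conf_space n) g \<and> g 0 = x0 \<and> g 1 = x0 \<longrightarrow>
           (\<exists>h. pathin (conf_space n) h \<and> h ` {0..1} \<subseteq> conf_T n \<and>
                homotopic_with (\<lambda>k. k 0 = x0 \<and> k 1 = x0)
                  (top_of_set {0..1}) (conf_space n) g h)"
proof (intro allI impI)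
  fix g assume "pathin (conf_space n) g \<and> g 0 = x0 \<and> g 1 = x0"
  then obtain N w ys ctr rad where data: "staircase_data n N w ys ctr rad"
    and ends: "w 0 ` {..<n} = x0" "w N ` {..<n} = x0"
    and hom: "homotopic_with (\<lambda>k. k 0 = x0 \<and> k 1 = x0) (top_of_set {0..1}) (conf_space n)
           g (\<lambda>t. staircase n N w ys t ` {..<n})"
    using loop_homotopic_staircase[OF assms(1) _ _ _ assms(3)] by blast
  have "homotopic_with (\<lambda>k. k 0 = x0 \<and> k 1 = x0) (top_of_set {0..1}) (conf_space n)
      g (\<lambda>t. tree_shadow n N w ys t ` {..<n})"
    using hom staircase_homotopic_tree_shadow[OF data ends] by (rule homotopic_with_trans)
  then show "\<exists>h. pathin (conf_space n) h \<and> h ` {0..1} \<subseteq> conf_T n \<and>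
      homotopic_with (\<lambda>k. k 0 = x0 \<and> k 1 = x0) (top_of_set {0..1}) (conf_space n) g h"
    using pathin_tree_shadow[OF data] tree_shadow_in_conf_T[OF data] by blast
qed

end
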